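(* Let $P$ be a poset and $f:(X,\varphi_X)\to(Y,\varphi_Y)$ a map in $\mathrm{Top}_{N(P)}$. There exist a strongly filtered space $(Z,\varphi_Z)$, a fibration $q:(Z,\varphi_Z)\to(Y,\varphi_Y)$, and filtered maps $i:(X,\varphi_X)\to(Z,\varphi_Z)$ and $r:(Z,\varphi_Z)\to(X,\varphi_X)$ such that $f=q\circ i$, $r\circ i=\mathrm{Id}_X$, and $i\circ r$ is filtered homotopic to $\mathrm{Id}_Z$.
   Context: $\mathrm{Top}$ is the category of $\Delta$-generated spaces. $\mathrm{Top}_{N(P)}$ (strongly filtered spaces): spaces $X$ with continuous $\varphi_X:X\to\|N(P)\|$, filtered maps commuting over $\|N(P)\|$. A filtered homotopy is a filtered map $(Z\times[0,1],\varphi_Z\circ pr_Z)\to(Z,\varphi_Z)$. For a nondegenerate simplex $\varphi:\Delta^n\hookrightarrow N(P)$, $\|\Delta^\varphi\|_{N(P)}=(\|\Delta^n\|,\|\varphi\|)$; $\mathcal C^0_{N(P)}(A,X)$ is the space of filtered maps (subspace topology), and $D(X)(\Delta^\varphi)=\mathrm{Sing}(\mathcal C^0_{N(P)}(\|\Delta^\varphi\|_{N(P)},X))$. A map $q$ is a fibration if $D(q)(\Delta^\varphi)$ is a Kan fibration for every nondegenerate simplex $\Delta^\varphi$ of $N(P)$. *)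

theory Defs
  imports "HOL-Homology.Homology"
begin

definition simplex_top :: "nat \<Rightarrow> (nat \<Rightarrow> real) topology" where
  "simplex_top n = subtopology (powertop_real UNIV) (standard_simplex n)"

definition delta_generated :: "'a topology \<Rightarrow> bool" where
  "delta_generated X \<longleftrightarrow>
     (\<forall>U. U \<subseteq> topspace X \<longrightarrow>
        (\<forall>n \<sigma>. continuous_map (simplex_top n) X \<sigma> \<longrightarrow>
              openin (simplex_top n) {t \<in> standard_simplex n. \<sigma> t \<in> U})
        \<longrightarrow> openin X U)"

(* Delta-ification (the coreflection of Top_all into Delta-generated spaces) *)
definition dtop :: "'a topology \<Rightarrow> 'a topology" where
  "dtop X = topology (\<lambda>U. U \<subseteq> topspace X \<and>
        (\<forall>n \<sigma>. continuous_map (simplex_top n) X \<sigma> \<longrightarrow>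
              openin (simplex_top n) {t \<in> standard_simplex n. \<sigma> t \<in> U}))"

(* nondegenerate n-simplices of the nerve N(P): strict chains c 0 < ... < c n *)
definition strict_chain :: "nat \<Rightarrow> (nat \<Rightarrow> 'p::order) \<Rightarrow> bool" where
  "strict_chain n c \<longleftrightarrow> (\<forall>i<n. c i < c (Suc i))"

(* the realization ||phi|| : ||Delta^n|| -> ||N(P)|| of the simplex c; points of
   ||N(P)|| are barycentric-coordinate functions P -> real *)
definition realize_simplex :: "nat \<Rightarrow> (nat \<Rightarrow> 'p::order) \<Rightarrow> (nat \<Rightarrow> real) \<Rightarrow> 'p \<Rightarrow> real" where
  "realize_simplex n c t = (\<lambda>p. \<Sum>i \<in> {i. i \<le> n \<and> c i = p}. t i)"

definition nerve_points :: "('p::order \<Rightarrow> real) set" where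
  "nerve_points = (\<Union>n. \<Union>c \<in> {c. strict_chain n c}. realize_simplex n c ` standard_simplex n)"

definition nerve_realization :: "('p::order \<Rightarrow> real) topology" where
  "nerve_realization = topology (\<lambda>U. U \<subseteq> nerve_points \<and>
      (\<forall>n c. strict_chain n c \<longrightarrow>
          openin (simplex_top n) {t \<in> standard_simplex n. realize_simplex n c t \<in> U}))"

definition strongly_filtered :: "'a topology \<Rightarrow> ('a \<Rightarrow> 'p::order \<Rightarrow> real) \<Rightarrow> bool" where
  "strongly_filtered X \<phi> \<longleftrightarrow> delta_generated X \<and> continuous_map X nerve_realization \<phi>"

definition filtered_map ::
  "'a topology \<Rightarrow> ('a \<Rightarrow> 'p::order \<Rightarrow> real) \<Rightarrow> 'b topology \<Rightarrow> ('b \<Rightarrow> 'p \<Rightarrow> real) \<Rightarrow> ('a \<Rightarrow> 'b) \<Rightarrow> bool" where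
  "filtered_map X \<phi>X Y \<phi>Y f \<longleftrightarrow> continuous_map X Y f \<and> (\<forall>x \<in> topspace X. \<phi>Y (f x) = \<phi>X x)"

(* filtered homotopy: a filtered map (Z x [0,1], phi_Z o pr_Z) -> (Z, phi_Z),
   the product taken in Delta-generated spaces *)
definition filtered_homotopic ::
  "'a topology \<Rightarrow> ('a \<Rightarrow> 'p::order \<Rightarrow> real) \<Rightarrow> ('a \<Rightarrow> 'a) \<Rightarrow> ('a \<Rightarrow> 'a) \<Rightarrow> bool" where
  "filtered_homotopic Z \<phi> g h \<longleftrightarrow>
     (\<exists>H. filtered_map (dtop (prod_topology Z (top_of_set {0..1::real}))) (\<lambda>(z,t). \<phi> z) Z \<phi> H
          \<and> (\<forall>z \<in> topspace Z. H (z, 0) = g z \<and> H (z, 1) = h z))"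

definition compact_open :: "'s topology \<Rightarrow> 'x topology \<Rightarrow> ('s \<Rightarrow> 'x) topology" where
  "compact_open A X = topology_generated_by
     {{f. continuous_map A X f \<and> f \<in> extensional (topspace A) \<and> f ` K \<subseteq> U} | K U.
        compactin A K \<and> openin X U}"

(* internal hom in Delta-generated spaces *)
definition mapping_space :: "'s topology \<Rightarrow> 'x topology \<Rightarrow> ('s \<Rightarrow> 'x) topology" where
  "mapping_space A X = dtop (compact_open A X)"

definition filtered_mapping_space ::
  "'s topology \<Rightarrow> ('s \<Rightarrow> 'p::order \<Rightarrow> real) \<Rightarrow> 'x topology \<Rightarrow> ('x \<Rightarrow> 'p \<Rightarrow> real) \<Rightarrow> ('s \<Rightarrow> 'x) topology" where
  "filtered_mapping_space A \<phi>A X \<phi>X =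
     dtop (subtopology (mapping_space A X) {f. filtered_map A \<phi>A X \<phi>X f})"

definition postcomp :: "'s topology \<Rightarrow> ('x \<Rightarrow> 'y) \<Rightarrow> ('s \<Rightarrow> 'x) \<Rightarrow> ('s \<Rightarrow> 'y)" where
  "postcomp A q g = restrict (q \<circ> g) (topspace A)"

definition sing_map :: "nat \<Rightarrow> ('a \<Rightarrow> 'b) \<Rightarrow> ((nat \<Rightarrow> real) \<Rightarrow> 'a) \<Rightarrow> ((nat \<Rightarrow> real) \<Rightarrow> 'b)" where
  "sing_map m h \<sigma> = restrict (h \<circ> \<sigma>) (standard_simplex m)"

(* Sing(h) : Sing(M) -> Sing(N) is a Kan fibration: every horn Lambda^n_k -> Sing M
   (given by compatible faces x i, i ~= k) together with an n-simplex y of Sing N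
   extending its image admits a lift *)
definition kan_fibration_sing :: "'a topology \<Rightarrow> 'b topology \<Rightarrow> ('a \<Rightarrow> 'b) \<Rightarrow> bool" where
  "kan_fibration_sing M N h \<longleftrightarrow>
     (\<forall>n k x y. 1 \<le> n \<longrightarrow> k \<le> n \<longrightarrow>
        (\<forall>i\<le>n. i \<noteq> k \<longrightarrow> singular_simplex (n - 1) M (x i)) \<longrightarrow>
        (\<forall>i j. i < j \<longrightarrow> j \<le> n \<longrightarrow> i \<noteq> k \<longrightarrow> j \<noteq> k \<longrightarrow>
            singular_face (n - 1) i (x j) = singular_face (n - 1) (j - 1) (x i)) \<longrightarrow>
        singular_simplex n N y \<longrightarrow>
        (\<forall>i\<le>n. i \<noteq> k \<longrightarrow> singular_face n i y = sing_map (n - 1) h (x i)) \<longrightarrow>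
        (\<exists>z. singular_simplex n M z \<and> (\<forall>i\<le>n. i \<noteq> k \<longrightarrow> singular_face n i z = x i)
             \<and> sing_map n h z = y))"

(* fibrations in Top_N(P): D(q)(Delta^phi) is a Kan fibration for every
   nondegenerate simplex phi of N(P) *)
definition filtered_fibration ::
  "'a topology \<Rightarrow> ('a \<Rightarrow> 'p::order \<Rightarrow> real) \<Rightarrow> 'b topology \<Rightarrow> ('b \<Rightarrow> 'p \<Rightarrow> real) \<Rightarrow> ('a \<Rightarrow> 'b) \<Rightarrow> bool" where
  "filtered_fibration Z \<phi>Z Y \<phi>Y q \<longleftrightarrow>
     (\<forall>n c. strict_chain n c \<longrightarrow>
        kan_fibration_sing
          (filtered_mapping_space (simplex_top n) (realize_simplex n c) Z \<phi>Z)
          (filtered_mapping_space (simplex_top n) (realize_simplex n c) Y \<phi>Y)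
          (postcomp (simplex_top n) q))"

end

theory Submission
  imports Defs "HOL-Analysis.Analysis"
begin

text \<open>\<open>Z\<close> is the mapping path space of \<open>f\<close>: pairs \<open>(x, \<gamma>)\<close> of a point of \<open>X\<close> and a path in
  \<open>Y\<close> starting at \<open>f x\<close> and staying over \<open>\<phi>X x\<close>, topologised as a Delta-generated subspace of
  \<open>X \<times> Y\<^sup>I\<close>. Including \<open>x\<close> as the constant path and forgetting the path are filtered maps,
  and shrinking every path to its starting point is a filtered homotopy from their composite to
  the identity. The endpoint map \<open>q\<close> is a fibration because its horn lifting problems can be
  solved explicitly: \<open>\<Delta>\<^sup>n\<close> retracts onto the horn \<open>\<Lambda>\<^sup>n\<^sub>k\<close> along straight lines, and over a
  point \<open>s\<close> one runs through the given path over the retracted point and then follows the given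
  simplex of \<open>Y\<close> back along the segment to \<open>s\<close>. Continuity into \<open>Z\<close> can be checked
  componentwise on Delta-generated domains, where the exponential law for the compact exponents
  applies; products of two simplices are such domains, being quotients of a simplex.\<close>

section \<open>Delta-generated spaces\<close>

lemma istopology_dtop:
  "istopology (\<lambda>U. U \<subseteq> topspace X \<and>
        (\<forall>n \<sigma>. continuous_map (simplex_top n) X \<sigma> \<longrightarrow>
              openin (simplex_top n) {t \<in> standard_simplex n. \<sigma> t \<in> U}))"
proof -
  have i: "\<And>A \<sigma> S T. {t \<in> A. \<sigma> t \<in> S \<inter> T} = {t \<in> A. \<sigma> t \<in> S} \<inter> {t \<in> A. \<sigma> t \<in> T}"
    and u: "\<And>A \<sigma> K. {t \<in> A. \<sigma> t \<in> \<Union>K} = (\<Union>S\<in>K. {t \<in> A. \<sigma> t \<in> S})"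
    by auto
  show ?thesis
    unfolding istopology_def i u by (auto intro!: openin_Int openin_Union)
qed

lemma openin_dtop:
  "openin (dtop X) U \<longleftrightarrow> U \<subseteq> topspace X \<and>
        (\<forall>n \<sigma>. continuous_map (simplex_top n) X \<sigma> \<longrightarrow>
              openin (simplex_top n) {t \<in> standard_simplex n. \<sigma> t \<in> U})"
  unfolding dtop_def by (simp add: topology_inverse'[OF istopology_dtop])

lemma topspace_simplex_top [simp]: "topspace (simplex_top n) = standard_simplex n"
  by (simp add: simplex_top_def)

lemma openin_imp_openin_dtop:
  assumes "openin X U" shows "openin (dtop X) U"
  unfolding openin_dtop
proof (intro conjI allI impI)
  fix n \<sigma> assume "continuous_map (simplex_top n) X \<sigma>"
  from openin_continuous_map_preimage[OF this assms]
  show "openin (simplex_top n) {t \<in> standard_simplex n. \<sigma> t \<in> U}" by simp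
qed (use assms openin_subset in blast)

lemma topspace_dtop [simp]: "topspace (dtop X) = topspace X"
proof (rule subset_antisym)
  show "topspace (dtop X) \<subseteq> topspace X"
    using openin_topspace[of "dtop X"] unfolding openin_dtop by (rule conjunct1)
  show "topspace X \<subseteq> topspace (dtop X)"
    using openin_imp_openin_dtop[OF openin_topspace] by (rule openin_subset)
qed

lemma continuous_map_dtop_imp_continuous_map:
  "continuous_map W (dtop X) g \<Longrightarrow> continuous_map W X g"
  by (simp add: continuous_map_def openin_imp_openin_dtop)

lemma continuous_map_simplex_dtop [simp]:
  "continuous_map (simplex_top n) (dtop X) \<sigma> \<longleftrightarrow> continuous_map (simplex_top n) X \<sigma>"
proof
  assume "continuous_map (simplex_top n) X \<sigma>"
  then show "continuous_map (simplex_top n) (dtop X) \<sigma>"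
    unfolding continuous_map_def openin_dtop by simp
qed (rule continuous_map_dtop_imp_continuous_map)

lemma continuous_map_from_dtop:
  assumes "g \<in> topspace X \<rightarrow> topspace Y"
    and "\<And>n \<sigma>. continuous_map (simplex_top n) X \<sigma> \<Longrightarrow> continuous_map (simplex_top n) Y (g \<circ> \<sigma>)"
  shows "continuous_map (dtop X) Y g"
  unfolding continuous_map_def
proof (intro conjI allI impI)
  fix V assume V: "openin Y V"
  have "openin (simplex_top n) {t \<in> standard_simplex n. \<sigma> t \<in> {x \<in> topspace X. g x \<in> V}}"
    if \<sigma>: "continuous_map (simplex_top n) X \<sigma>" for n \<sigma>
  proof -
    have "{t \<in> standard_simplex n. \<sigma> t \<in> {x \<in> topspace X. g x \<in> V}}
        = {t \<in> topspace (simplex_top n). (g \<circ> \<sigma>) t \<in> V}"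
      using \<sigma> by (auto simp: continuous_map_def)
    then show ?thesis
      using openin_continuous_map_preimage[OF assms(2)[OF \<sigma>] V] by simp
  qed
  then show "openin (dtop X) {x \<in> topspace (dtop X). g x \<in> V}"
    by (simp add: openin_dtop)
qed (use assms(1) in simp)

lemma continuous_map_from_dtop_if_continuous_map:
  assumes g: "continuous_map X Y g"
  shows "continuous_map (dtop X) Y g"
proof (rule continuous_map_from_dtop)
  show "g \<in> topspace X \<rightarrow> topspace Y"
    using g by (rule continuous_map_funspace)
  fix n \<sigma> assume "continuous_map (simplex_top n) X \<sigma>"
  then show "continuous_map (simplex_top n) Y (g \<circ> \<sigma>)"
    using g by (rule continuous_map_compose)
qed

lemma delta_generated_dtop: "delta_generated (dtop X)"
  unfolding delta_generated_def topspace_dtop continuous_map_simplex_dtop openin_dtop[of X]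
  by blast

lemma delta_generated_iff_dtop_eq: "delta_generated X \<longleftrightarrow> dtop X = X"
proof
  assume dg: "delta_generated X"
  have "openin (dtop X) U \<Longrightarrow> openin X U" for U
    using dg unfolding delta_generated_def openin_dtop[of X U] by simp
  then show "dtop X = X"
    using openin_imp_openin_dtop by (auto simp: topology_eq)
next
  assume "dtop X = X"
  then show "delta_generated X"
    using delta_generated_dtop[of X] by simp
qed

lemma continuous_map_into_dtop:
  assumes "delta_generated W" and g: "continuous_map W X g"
  shows "continuous_map W (dtop X) g"
proof -
  have "continuous_map (dtop W) (dtop X) g"
  proof (rule continuous_map_from_dtop)
    show "g \<in> topspace W \<rightarrow> topspace (dtop X)"
      using g by (simp add: continuous_map_funspace)
    fix n \<sigma> assume "continuous_map (simplex_top n) W \<sigma>"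
    then show "continuous_map (simplex_top n) (dtop X) (g \<circ> \<sigma>)"
      using continuous_map_compose g by simp
  qed
  then show ?thesis
    using assms(1) by (simp add: delta_generated_iff_dtop_eq)
qed

lemma delta_generated_quotient_of_simplex:
  assumes "quotient_map (simplex_top N) T \<pi>"
  shows "delta_generated T"
  unfolding delta_generated_def
proof (intro allI impI)
  fix U assume U: "U \<subseteq> topspace T"
    and "\<forall>n \<sigma>. continuous_map (simplex_top n) T \<sigma> \<longrightarrow>
           openin (simplex_top n) {t \<in> standard_simplex n. \<sigma> t \<in> U}"
  moreover have "continuous_map (simplex_top N) T \<pi>"
    using assms quotient_imp_continuous_map by blast
  ultimately have "openin (simplex_top N) {t \<in> standard_simplex N. \<pi> t \<in> U}"
    by blast
  with assms U show "openin T U"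
    unfolding quotient_map_def by simp
qed

section \<open>Topological simplices\<close>

lemma compact_space_simplex_top: "compact_space (simplex_top n)"
  unfolding simplex_top_def by (rule compact_space_subtopology[OF compactin_standard_simplex])

lemma Hausdorff_space_simplex_top: "Hausdorff_space (simplex_top n)"
  unfolding simplex_top_def
  by (intro Hausdorff_space_subtopology Hausdorff_space_product_topology[THEN iffD2]) simp

lemma continuous_map_simplex_top_coordinate:
  "continuous_map (simplex_top n) euclideanreal (\<lambda>s. s i)"
  unfolding simplex_top_def
  by (intro continuous_map_from_subtopology continuous_map_product_projection) simp

lemma continuous_map_into_simplex_top:
  assumes "\<And>i. continuous_map T euclideanreal (\<lambda>x. g x i)"
    and "\<And>x. x \<in> topspace T \<Longrightarrow> g x \<in> standard_simplex n"
  shows "continuous_map T (simplex_top n) g"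
  unfolding simplex_top_def
  using assms by (auto simp: continuous_map_in_subtopology continuous_map_componentwise_UNIV)

lemma singular_simplex_iff_continuous_map:
  "singular_simplex p X f \<longleftrightarrow>
     continuous_map (simplex_top p) X f \<and> f \<in> extensional (standard_simplex p)"
  by (simp add: singular_simplex_def simplex_top_def)

lemma delta_generated_simplex_top: "delta_generated (simplex_top n)"
  unfolding delta_generated_def
proof (intro allI impI)
  fix U assume "U \<subseteq> topspace (simplex_top n)"
    and "\<forall>m \<sigma>. continuous_map (simplex_top m) (simplex_top n) \<sigma> \<longrightarrow>
           openin (simplex_top m) {t \<in> standard_simplex m. \<sigma> t \<in> U}"
  then have "openin (simplex_top n) {t \<in> standard_simplex n. id t \<in> U}"
    using continuous_map_id by metis
  moreover have "{t \<in> standard_simplex n. id t \<in> U} = U"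
    using \<open>U \<subseteq> topspace (simplex_top n)\<close> by auto
  ultimately show "openin (simplex_top n) U"
    by simp
qed

text \<open>A point of the simplex of dimension \<open>(a + 1) * (b + 1) - 1\<close> is read as a probability
  distribution on \<open>{0..a} \<times> {0..b}\<close>, with \<open>(i, j)\<close> stored at index \<open>i * Suc b + j\<close>, and is
  sent to its two marginals. Product distributions show surjectivity.\<close>

definition simplex_marginals :: "nat \<Rightarrow> nat \<Rightarrow> (nat \<Rightarrow> real) \<Rightarrow> (nat \<Rightarrow> real) \<times> (nat \<Rightarrow> real)"
  where "simplex_marginals a b l =
    ((\<lambda>i. if i \<le> a then \<Sum>j\<le>b. l (i * Suc b + j) else 0),
     (\<lambda>j. if j \<le> b then \<Sum>i\<le>a. l (i * Suc b + j) else 0))"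

lemma sum_lessThan_mult_Suc:
  "(\<Sum>m<Suc a * Suc b. h m) = (\<Sum>i\<le>a. \<Sum>j\<le>b. h (i * Suc b + j))"
proof -
  have "(\<Sum>m<Suc a * Suc b. h m) = (\<Sum>i<Suc a. sum h {i * Suc b..<i * Suc b + Suc b})"
    by (rule sum.nat_group[symmetric])
  also have "\<dots> = (\<Sum>i<Suc a. \<Sum>j<Suc b. h (i * Suc b + j))"
  proof -
    have "sum h {c..<c + k} = (\<Sum>j<k. h (c + j))" for c k :: nat
      by (induct k) (simp_all add: add.commute)
    then show ?thesis by simp
  qed
  finally show ?thesis
    by (simp add: lessThan_Suc_atMost)
qed

lemma sum_standard_simplex_mult_Suc:
  "l \<in> standard_simplex (Suc a * Suc b - 1) \<Longrightarrow> (\<Sum>i\<le>a. \<Sum>j\<le>b. l (i * Suc b + j)) = 1"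
  using sum_lessThan_mult_Suc[where h=l]
  by (simp add: standard_simplex_def atMost_atLeast0 atLeastLessThanSuc_atLeastAtMost[symmetric]
      lessThan_atLeast0)

lemma simplex_marginals_in_standard_simplex:
  assumes l: "l \<in> standard_simplex (Suc a * Suc b - 1)"
  shows "simplex_marginals a b l \<in> standard_simplex a \<times> standard_simplex b"
proof -
  have nonneg: "\<And>m. 0 \<le> l m"
    using l by (simp add: standard_simplex_def)
  have total: "(\<Sum>i\<le>a. \<Sum>j\<le>b. l (i * Suc b + j)) = 1"
    by (rule sum_standard_simplex_mult_Suc[OF l])
  then have total': "(\<Sum>j\<le>b. \<Sum>i\<le>a. l (i * Suc b + j)) = 1"
    by (simp add: sum.swap[of _ "{..a}"])
  have "(\<Sum>j\<le>b. l (i * Suc b + j)) \<le> 1" if "i \<le> a" for i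
    using member_le_sum[of i "{..a}" "\<lambda>i. \<Sum>j\<le>b. l (i * Suc b + j)"] that total
    by (simp add: sum_nonneg nonneg)
  moreover have "(\<Sum>i\<le>a. l (i * Suc b + j)) \<le> 1" if "j \<le> b" for j
    using member_le_sum[of j "{..b}" "\<lambda>j. \<Sum>i\<le>a. l (i * Suc b + j)"] that total'
    by (simp add: sum_nonneg nonneg)
  ultimately show ?thesis
    using total total'
    by (auto simp: standard_simplex_def simplex_marginals_def sum_nonneg nonneg)
qed

lemma simplex_marginals_surj:
  assumes s: "s \<in> standard_simplex a" and w: "w \<in> standard_simplex b"
  shows "(s, w) \<in> simplex_marginals a b ` standard_simplex (Suc a * Suc b - 1)"
proof
  define l where "l m = (if m < Suc a * Suc b then s (m div Suc b) * w (m mod Suc b) else 0)" for m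
  have index_less: "i * Suc b + j < Suc a * Suc b" if "i \<le> a" "j \<le> b" for i j
  proof -
    have "i * Suc b + j < Suc i * Suc b" using that by simp
    also have "\<dots> \<le> Suc a * Suc b" using that by (intro mult_le_mono1) simp
    finally show ?thesis .
  qed
  have l_index: "l (i * Suc b + j) = s i * w j" if "i \<le> a" "j \<le> b" for i j
  proof -
    have "(i * Suc b + j) div Suc b = i"
      using \<open>j \<le> b\<close>
      by (metis add.commute div_mult_self1 div_less le_imp_less_Suc add_0 nat.distinct(1))
    moreover have "(i * Suc b + j) mod Suc b = j"
      using \<open>j \<le> b\<close> by (metis add.commute mod_mult_self1 mod_less le_imp_less_Suc)
    ultimately show ?thesis
      using index_less[OF that] by (simp only: l_def if_True)
  qed
  have s1: "(\<Sum>i\<le>a. s i) = 1" and w1: "(\<Sum>j\<le>b. w j) = 1"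
    and s0: "\<And>i. a < i \<Longrightarrow> s i = 0" and w0: "\<And>j. b < j \<Longrightarrow> w j = 0"
    and s01: "\<And>i. 0 \<le> s i \<and> s i \<le> 1" and w01: "\<And>j. 0 \<le> w j \<and> w j \<le> 1"
    using s w by (auto simp: standard_simplex_def)
  have "fst (simplex_marginals a b l) i = s i" for i
    using l_index s0[of i] by (simp add: simplex_marginals_def sum_distrib_left[symmetric] w1)
  moreover have "snd (simplex_marginals a b l) j = w j" for j
    using l_index w0[of j] by (simp add: simplex_marginals_def sum_distrib_right[symmetric] s1)
  ultimately show "(s, w) = simplex_marginals a b l"
    by (simp add: prod_eq_iff fun_eq_iff)
  have "(\<Sum>m\<le>Suc a * Suc b - 1. l m) = (\<Sum>i\<le>a. \<Sum>j\<le>b. s i * w j)"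
    using sum_lessThan_mult_Suc[where h=l] l_index
    by (simp add: atMost_atLeast0 atLeastLessThanSuc_atLeastAtMost[symmetric] lessThan_atLeast0)
  also have "\<dots> = 1"
    by (simp add: sum_distrib_left[symmetric] w1 s1)
  finally show "l \<in> standard_simplex (Suc a * Suc b - 1)"
    using s01 w01 by (auto simp: standard_simplex_def l_def mult_le_one)
qed

lemma simplex_marginals_image:
  "simplex_marginals a b ` standard_simplex (Suc a * Suc b - 1) = standard_simplex a \<times> standard_simplex b"
proof
  show "simplex_marginals a b ` standard_simplex (Suc a * Suc b - 1)
      \<subseteq> standard_simplex a \<times> standard_simplex b"
    using simplex_marginals_in_standard_simplex by blast
qed (use simplex_marginals_surj in auto)

lemma continuous_map_simplex_marginals:
  "continuous_map (simplex_top (Suc a * Suc b - 1)) (prod_topology (simplex_top a) (simplex_top b))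
     (simplex_marginals a b)"
  unfolding continuous_map_pairwise o_def
  using simplex_marginals_in_standard_simplex
  by (intro conjI continuous_map_into_simplex_top)
     (auto simp: simplex_marginals_def continuous_map_simplex_top_coordinate continuous_map_sum)

lemma delta_generated_prod_simplex_top:
  "delta_generated (prod_topology (simplex_top a) (simplex_top b))"
proof (rule delta_generated_quotient_of_simplex)
  show "quotient_map (simplex_top (Suc a * Suc b - 1)) (prod_topology (simplex_top a) (simplex_top b))
      (simplex_marginals a b)"
    by (intro continuous_imp_quotient_map continuous_map_simplex_marginals compact_space_simplex_top
        Hausdorff_space_prod_topology[THEN iffD2] disjI2 conjI Hausdorff_space_simplex_top)
       (use simplex_marginals_image in simp)
qed

section \<open>The compact-open topology\<close>

lemma topspace_compact_open:
  "topspace (compact_open A X) = {g. continuous_map A X g \<and> g \<in> extensional (topspace A)}"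
proof -
  have "{g. continuous_map A X g \<and> g \<in> extensional (topspace A) \<and> g ` {} \<subseteq> topspace X}
      \<in> {{g. continuous_map A X g \<and> g \<in> extensional (topspace A) \<and> g ` K \<subseteq> U} | K U.
           compactin A K \<and> openin X U}"
    by blast
  then show ?thesis
    unfolding compact_open_def topology_generated_by_topspace by auto
qed

lemma openin_compact_open_subbasic:
  assumes "compactin A K" "openin X U"
  shows "openin (compact_open A X)
           {g. continuous_map A X g \<and> g \<in> extensional (topspace A) \<and> g ` K \<subseteq> U}"
  unfolding compact_open_def using assms by (intro topology_generated_by_Basis) auto

lemma continuous_map_into_compact_open:
  assumes "\<And>w. w \<in> topspace W \<Longrightarrow> g w \<in> topspace (compact_open A X)"
    and "\<And>K U. compactin A K \<Longrightarrow> openin X U \<Longrightarrow> openin W {w \<in> topspace W. g w ` K \<subseteq> U}"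
  shows "continuous_map W (compact_open A X) g"
  unfolding compact_open_def
proof (rule continuous_on_generated_topo)
  fix V assume "V \<in> {{g. continuous_map A X g \<and> g \<in> extensional (topspace A) \<and> g ` K \<subseteq> U} | K U.
        compactin A K \<and> openin X U}"
  then obtain K U where "compactin A K" "openin X U"
    and V: "V = {g. continuous_map A X g \<and> g \<in> extensional (topspace A) \<and> g ` K \<subseteq> U}"
    by blast
  moreover have "g -` V \<inter> topspace W = {w \<in> topspace W. g w ` K \<subseteq> U}"
    using assms(1) unfolding V topspace_compact_open by auto
  ultimately show "openin W (g -` V \<inter> topspace W)"
    using assms(2) by simp
next
  show "g ` topspace W \<subseteq> \<Union> {{g. continuous_map A X g \<and> g \<in> extensional (topspace A) \<and> g ` K \<subseteq> U}
      | K U. compactin A K \<and> openin X U}"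
    using assms(1) unfolding compact_open_def topology_generated_by_topspace by blast
qed

lemma continuous_map_compact_open_eval:
  assumes "a \<in> topspace A"
  shows "continuous_map (compact_open A X) X (\<lambda>g. g a)"
  unfolding continuous_map_def
proof (intro conjI allI impI)
  show "(\<lambda>g. g a) \<in> topspace (compact_open A X) \<rightarrow> topspace X"
    using assms by (auto simp: topspace_compact_open continuous_map_def)
  fix U assume "openin X U"
  then have "openin (compact_open A X)
      {g. continuous_map A X g \<and> g \<in> extensional (topspace A) \<and> g ` {a} \<subseteq> U}"
    using assms by (intro openin_compact_open_subbasic) simp_all
  moreover have "{g \<in> topspace (compact_open A X). g a \<in> U}
      = {g. continuous_map A X g \<and> g \<in> extensional (topspace A) \<and> g ` {a} \<subseteq> U}"
    by (auto simp: topspace_compact_open)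
  ultimately show "openin (compact_open A X) {g \<in> topspace (compact_open A X). g a \<in> U}"
    by simp
qed

text \<open>The curried map is restricted to \<open>topspace A\<close> because points of the compact-open
  topology are extensional.\<close>

lemma continuous_map_curry_compact_open:
  assumes F: "continuous_map (prod_topology W A) X F"
  shows "continuous_map W (compact_open A X) (\<lambda>w. restrict (\<lambda>a. F (w, a)) (topspace A))"
proof (rule continuous_map_into_compact_open)
  fix w assume "w \<in> topspace W"
  then have "continuous_map A X (\<lambda>a. F (w, a))"
    using continuous_map_compose[OF _ F, of A "Pair w"]
    by (simp add: continuous_map_pairwise o_def)
  then show "restrict (\<lambda>a. F (w, a)) (topspace A) \<in> topspace (compact_open A X)"
    by (simp add: topspace_compact_open continuous_map_eq[of A X "\<lambda>a. F (w, a)"])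
next
  fix K U assume K: "compactin A K" and U: "openin X U"
  have KA: "K \<subseteq> topspace A"
    using K compactin_subset_topspace by blast
  have preimage: "openin (prod_topology W A) {x \<in> topspace (prod_topology W A). F x \<in> U}"
    using F U openin_continuous_map_preimage by blast
  show "openin W {w \<in> topspace W. restrict (\<lambda>a. F (w, a)) (topspace A) ` K \<subseteq> U}"
  proof (subst openin_subopen, intro ballI)
    fix w assume w: "w \<in> {w \<in> topspace W. restrict (\<lambda>a. F (w, a)) (topspace A) ` K \<subseteq> U}"
    then have "w \<in> topspace W" and "\<And>a. a \<in> K \<Longrightarrow> F (w, a) \<in> U"
      using KA by (auto simp: image_subset_iff)
    then have "{w} \<times> K \<subseteq> {x \<in> topspace (prod_topology W A). F x \<in> U}"
      using KA by auto
    from tube_lemma_right[OF preimage K \<open>w \<in> topspace W\<close> this]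
    obtain V1 V2 where "openin W V1" "w \<in> V1" "K \<subseteq> V2"
      and tube: "V1 \<times> V2 \<subseteq> {x \<in> topspace (prod_topology W A). F x \<in> U}"
      by blast
    have "V1 \<subseteq> {w \<in> topspace W. restrict (\<lambda>a. F (w, a)) (topspace A) ` K \<subseteq> U}"
    proof
      fix v assume "v \<in> V1"
      then have "v \<in> topspace W" and "\<And>a. a \<in> K \<Longrightarrow> F (v, a) \<in> U"
        using tube \<open>K \<subseteq> V2\<close> openin_subset[OF \<open>openin W V1\<close>] by auto
      then show "v \<in> {w \<in> topspace W. restrict (\<lambda>a. F (w, a)) (topspace A) ` K \<subseteq> U}"
        using KA by auto
    qed
    with \<open>openin W V1\<close> \<open>w \<in> V1\<close> show "\<exists>T. openin W T \<and> w \<in> T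
        \<and> T \<subseteq> {w \<in> topspace W. restrict (\<lambda>a. F (w, a)) (topspace A) ` K \<subseteq> U}"
      by blast
  qed
qed

lemma continuous_map_uncurry_compact_open:
  assumes A: "locally_compact_space A" "Hausdorff_space A"
    and g: "continuous_map W (compact_open A X) g"
  shows "continuous_map (prod_topology W A) X (\<lambda>(w, a). g w a)"
  unfolding continuous_map_def
proof (intro conjI allI impI)
  have gw: "\<And>w. w \<in> topspace W \<Longrightarrow> continuous_map A X (g w) \<and> g w \<in> extensional (topspace A)"
    using g by (auto simp: continuous_map_def topspace_compact_open)
  then show "(\<lambda>(w, a). g w a) \<in> topspace (prod_topology W A) \<rightarrow> topspace X"
    by (auto simp: continuous_map_def)
  have base: "neighbourhood_base_of (compactin A) A"
    using A locally_compact_space_neighbourhood_base by blast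
  fix U assume U: "openin X U"
  show "openin (prod_topology W A) {x \<in> topspace (prod_topology W A). (case x of (w, a) \<Rightarrow> g w a) \<in> U}"
  proof (subst openin_subopen, intro ballI)
    fix p assume p: "p \<in> {x \<in> topspace (prod_topology W A). (case x of (w, a) \<Rightarrow> g w a) \<in> U}"
    then obtain w a where pwa: "p = (w, a)" and w: "w \<in> topspace W" and "a \<in> topspace A"
      and "g w a \<in> U"
      by auto
    then have "openin A {a \<in> topspace A. g w a \<in> U} \<and> a \<in> {a \<in> topspace A. g w a \<in> U}"
      using gw[OF w] U openin_continuous_map_preimage by blast
    then obtain V K where "openin A V" "compactin A K" "a \<in> V" "V \<subseteq> K"
      and K: "K \<subseteq> {a \<in> topspace A. g w a \<in> U}"
      using base unfolding neighbourhood_base_of by meson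
    have "openin W {w \<in> topspace W. g w \<in>
        {g. continuous_map A X g \<and> g \<in> extensional (topspace A) \<and> g ` K \<subseteq> U}}"
      using openin_continuous_map_preimage[OF g openin_compact_open_subbasic[OF \<open>compactin A K\<close> U]]
      by simp
    moreover have "{w \<in> topspace W. g w \<in>
        {g. continuous_map A X g \<and> g \<in> extensional (topspace A) \<and> g ` K \<subseteq> U}}
        = {w \<in> topspace W. g w ` K \<subseteq> U}"
      using gw by auto
    ultimately have "openin (prod_topology W A) ({w \<in> topspace W. g w ` K \<subseteq> U} \<times> V)"
      using \<open>openin A V\<close> by (simp add: openin_prod_Times_iff)
    moreover have "p \<in> {w \<in> topspace W. g w ` K \<subseteq> U} \<times> V"
      using pwa w K \<open>a \<in> V\<close> by auto
    moreover have "{w \<in> topspace W. g w ` K \<subseteq> U} \<times> V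
        \<subseteq> {x \<in> topspace (prod_topology W A). (case x of (w, a) \<Rightarrow> g w a) \<in> U}"
      using \<open>V \<subseteq> K\<close> K by auto
    ultimately show "\<exists>T. openin (prod_topology W A) T \<and> p \<in> T
        \<and> T \<subseteq> {x \<in> topspace (prod_topology W A). (case x of (w, a) \<Rightarrow> g w a) \<in> U}"
      by blast
  qed
qed

lemma continuous_map_simplex_filtered_mapping_space:
  "continuous_map (simplex_top m) (filtered_mapping_space A \<psi> Z \<phi>) g \<longleftrightarrow>
     continuous_map (simplex_top m) (compact_open A Z) g
     \<and> (\<forall>t \<in> standard_simplex m. filtered_map A \<psi> Z \<phi> (g t))"
  unfolding filtered_mapping_space_def mapping_space_def
  by (auto simp: continuous_map_in_subtopology)

lemma continuous_map_filtered_mapping_space_uncurry: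
  assumes "continuous_map (simplex_top n) (filtered_mapping_space (simplex_top c) \<psi> Z \<phi>) g"
  shows "continuous_map (prod_topology (simplex_top n) (simplex_top c)) Z (\<lambda>p. g (fst p) (snd p))"
    and "\<And>s w. s \<in> standard_simplex n \<Longrightarrow> w \<in> standard_simplex c \<Longrightarrow> \<phi> (g s w) = \<psi> w"
    and "\<And>s. s \<in> standard_simplex n \<Longrightarrow> g s \<in> extensional (standard_simplex c)"
proof -
  have g: "continuous_map (simplex_top n) (compact_open (simplex_top c) Z) g"
    and filtered: "\<And>s. s \<in> standard_simplex n \<Longrightarrow> filtered_map (simplex_top c) \<psi> Z \<phi> (g s)"
    using assms by (simp_all add: continuous_map_simplex_filtered_mapping_space)
  have "continuous_map (prod_topology (simplex_top n) (simplex_top c)) Z (\<lambda>(s, w). g s w)"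
    using g by (intro continuous_map_uncurry_compact_open compact_imp_locally_compact_space
        compact_space_simplex_top Hausdorff_space_simplex_top)
  then show "continuous_map (prod_topology (simplex_top n) (simplex_top c)) Z (\<lambda>p. g (fst p) (snd p))"
    by (simp add: case_prod_unfold)
  show "\<phi> (g s w) = \<psi> w" if "s \<in> standard_simplex n" "w \<in> standard_simplex c" for s w
    using filtered[OF that(1)] that(2) by (simp add: filtered_map_def)
  show "g s \<in> extensional (standard_simplex c)" if "s \<in> standard_simplex n" for s
    using continuous_map_funspace[OF g] that by (simp add: Pi_iff topspace_compact_open)
qed

lemma continuous_map_filtered_mapping_space_curry:
  assumes L: "continuous_map (prod_topology (simplex_top n) (simplex_top c)) Z L"
    and L_filtered: "\<And>s w. s \<in> standard_simplex n \<Longrightarrow> w \<in> standard_simplex c \<Longrightarrow> \<phi> (L (s, w)) = \<psi> w"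
  shows "continuous_map (simplex_top n) (filtered_mapping_space (simplex_top c) \<psi> Z \<phi>)
           (\<lambda>s. restrict (\<lambda>w. L (s, w)) (standard_simplex c))"
proof -
  have g: "continuous_map (simplex_top n) (compact_open (simplex_top c) Z)
      (\<lambda>s. restrict (\<lambda>w. L (s, w)) (standard_simplex c))"
    using continuous_map_curry_compact_open[OF L] by simp
  moreover have "filtered_map (simplex_top c) \<psi> Z \<phi> (restrict (\<lambda>w. L (s, w)) (standard_simplex c))"
    if "s \<in> standard_simplex n" for s
    using continuous_map_funspace[OF g] that L_filtered
    by (auto simp: Pi_iff filtered_map_def topspace_compact_open)
  ultimately show ?thesis
    by (simp add: continuous_map_simplex_filtered_mapping_space)
qed

section \<open>Horns\<close>

definition delete_coord :: "nat \<Rightarrow> (nat \<Rightarrow> real) \<Rightarrow> nat \<Rightarrow> real"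
  where "delete_coord i s = (\<lambda>j. if j < i then s j else s (Suc j))"

definition horn :: "nat \<Rightarrow> nat \<Rightarrow> (nat \<Rightarrow> real) set"
  where "horn n k = {s \<in> standard_simplex n. \<exists>i\<le>n. i \<noteq> k \<and> s i = 0}"

lemma simplical_face_delete_coord: "s i = 0 \<Longrightarrow> simplical_face i (delete_coord i s) = s"
  by (auto simp: fun_eq_iff simplical_face_def delete_coord_def)

lemma delete_coord_simplical_face [simp]: "delete_coord i (simplical_face i u) = u"
  by (auto simp: fun_eq_iff simplical_face_def delete_coord_def)

lemma simplical_face_same_coord [simp]: "simplical_face i u i = 0"
  by (simp add: simplical_face_def)

lemma delete_coord_commute: "i < j \<Longrightarrow> delete_coord (j - 1) (delete_coord i s) = delete_coord i (delete_coord j s)"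
  by (auto simp: fun_eq_iff delete_coord_def)

lemma delete_coord_in_standard_simplex:
  assumes s: "s \<in> standard_simplex n" and "i \<le> n" and "s i = 0"
  shows "delete_coord i s \<in> standard_simplex (n - 1)"
proof (cases "n = 0")
  case True
  then show ?thesis
    using s assms by (simp add: standard_simplex_def)
next
  case False
  define skip where "skip j = (if j < i then j else Suc j)" for j
  have "skip ` {..n - 1} = {..n} - {i}"
  proof
    show "skip ` {..n - 1} \<subseteq> {..n} - {i}"
      using False \<open>i \<le> n\<close> by (auto simp: skip_def)
    show "{..n} - {i} \<subseteq> skip ` {..n - 1}"
    proof
      fix m assume m: "m \<in> {..n} - {i}"
      then have "m = skip (if m < i then m else m - 1)" "(if m < i then m else m - 1) \<le> n - 1"
        using \<open>i \<le> n\<close> by (auto simp: skip_def)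
      then show "m \<in> skip ` {..n - 1}"
        by blast
    qed
  qed
  moreover have "inj skip"
    by (auto simp: inj_def skip_def split: if_splits)
  ultimately have "sum s ({..n} - {i}) = (\<Sum>j\<le>n - 1. s (skip j))"
    using sum.reindex[of skip "{..n - 1}" s] by (simp add: inj_on_subset)
  then have "(\<Sum>j\<le>n - 1. delete_coord i s j) = sum s ({..n} - {i})"
    by (simp add: skip_def delete_coord_def if_distrib)
  also have "\<dots> = 1"
    using s assms by (simp add: sum_diff1 standard_simplex_def)
  finally show ?thesis
    using s \<open>i \<le> n\<close> by (auto simp: standard_simplex_def delete_coord_def)
qed

lemma continuous_map_delete_coord:
  assumes "i \<le> n"
  shows "continuous_map (subtopology (simplex_top n) {s. s i = 0}) (simplex_top (n - 1)) (delete_coord i)"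
  using assms delete_coord_in_standard_simplex
  by (intro continuous_map_into_simplex_top)
     (auto simp: delete_coord_def intro!: continuous_map_from_subtopology
       continuous_map_simplex_top_coordinate)

lemma simplical_face_in_horn:
  assumes "1 \<le> n" "i \<le> n" "i \<noteq> k" "u \<in> standard_simplex (n - 1)"
  shows "simplical_face i u \<in> horn n k"
  using assms simplical_face_in_standard_simplex[of n i u] by (auto simp: horn_def)

lemma singular_faces_agree_on_intersection:
  assumes compatible: "singular_face (n - 1) i (x j) = singular_face (n - 1) (j - 1) (x i)"
    and s: "s \<in> standard_simplex n" "s i = 0" "s j = 0" and "i < j" "j \<le> n"
  shows "x j (delete_coord j s) = x i (delete_coord i s)"
proof -
  define u where "u = delete_coord i (delete_coord j s)"
  have "delete_coord j s \<in> standard_simplex (n - 1)"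
    using delete_coord_in_standard_simplex s \<open>j \<le> n\<close> by blast
  moreover have "delete_coord j s i = 0"
    using s \<open>i < j\<close> by (simp add: delete_coord_def)
  ultimately have u: "u \<in> standard_simplex (n - 1 - Suc 0)"
    using delete_coord_in_standard_simplex[of "delete_coord j s" "n - 1" i] \<open>i < j\<close> \<open>j \<le> n\<close>
    by (simp add: u_def)
  have "simplical_face i u = delete_coord j s"
    using \<open>delete_coord j s i = 0\<close> by (simp add: u_def simplical_face_delete_coord)
  moreover have "simplical_face (j - 1) u = delete_coord i s"
  proof -
    have "delete_coord i s (j - 1) = 0"
      using s \<open>i < j\<close> by (simp add: delete_coord_def)
    then show ?thesis
      unfolding u_def delete_coord_commute[OF \<open>i < j\<close>, symmetric]
      by (rule simplical_face_delete_coord)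
  qed
  ultimately show ?thesis
    using fun_cong[OF compatible, of u] u by (simp add: singular_face_def)
qed

lemma horn_faces_agree:
  assumes compatible: "\<And>i j. i < j \<Longrightarrow> j \<le> n \<Longrightarrow> i \<noteq> k \<Longrightarrow> j \<noteq> k \<Longrightarrow>
            singular_face (n - 1) i (x j) = singular_face (n - 1) (j - 1) (x i)"
    and ij: "i \<le> n" "j \<le> n" "i \<noteq> k" "j \<noteq> k"
    and s: "s \<in> standard_simplex n" "s i = 0" "s j = 0"
  shows "x i (delete_coord i s) = x j (delete_coord j s)"
proof (cases i j rule: linorder_cases)
  case less
  then show ?thesis
    using singular_faces_agree_on_intersection[OF compatible[of i j] s] ij by simp
next
  case greater
  then show ?thesis
    using singular_faces_agree_on_intersection[OF compatible[of j i] s(1,3,2)] ij by simp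
qed simp

lemma horn_pasting:
  assumes cont: "\<And>i. i \<le> n \<Longrightarrow> i \<noteq> k \<Longrightarrow> continuous_map (simplex_top (n - 1)) M (x i)"
    and compatible: "\<And>i j. i < j \<Longrightarrow> j \<le> n \<Longrightarrow> i \<noteq> k \<Longrightarrow> j \<noteq> k \<Longrightarrow>
            singular_face (n - 1) i (x j) = singular_face (n - 1) (j - 1) (x i)"
  obtains h where "continuous_map (subtopology (simplex_top n) (horn n k)) M h"
    and "\<And>r i. r \<in> horn n k \<Longrightarrow> i \<le> n \<Longrightarrow> i \<noteq> k \<Longrightarrow> r i = 0 \<Longrightarrow> h r = x i (delete_coord i r)"
proof -
  define T where "T = subtopology (simplex_top n) (horn n k)"
  define face where "face i = {r \<in> horn n k. r i = 0}" for i
  have topspace_T: "topspace T = horn n k"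
    by (auto simp: T_def horn_def)
  have coordinate: "continuous_map T euclideanreal (\<lambda>s. s j)" for j
    unfolding T_def by (intro continuous_map_from_subtopology continuous_map_simplex_top_coordinate)
  obtain h where "continuous_map T M h"
    and h: "\<And>r i. i \<in> {..n} - {k} \<Longrightarrow> r \<in> topspace T \<inter> face i \<Longrightarrow> h r = x i (delete_coord i r)"
  proof (rule pasting_lemma_exists_closed[of "{..n} - {k}" T face M "\<lambda>i r. x i (delete_coord i r)"])
    show "topspace T \<subseteq> \<Union> (face ` ({..n} - {k}))"
      by (auto simp: topspace_T face_def horn_def)
  next
    fix i
    have "closedin T {r \<in> topspace T. r i \<in> {0}}"
      by (rule closedin_continuous_map_preimage[OF coordinate]) simp
    then show "closedin T (face i)"
      by (simp add: topspace_T face_def)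
  next
    fix i assume i: "i \<in> {..n} - {k}"
    have "continuous_map (subtopology T (face i)) (simplex_top (n - 1)) (delete_coord i)"
      unfolding T_def subtopology_subtopology
      by (rule continuous_map_from_subtopology_mono[OF continuous_map_delete_coord])
         (use i in \<open>auto simp: face_def\<close>)
    then show "continuous_map (subtopology T (face i)) M (\<lambda>r. x i (delete_coord i r))"
      using cont[of i] i continuous_map_compose[of _ _ "delete_coord i"] by (auto simp: o_def)
  next
    fix i j r assume "i \<in> {..n} - {k}" "j \<in> {..n} - {k}" "r \<in> topspace T \<inter> face i \<inter> face j"
    then show "x i (delete_coord i r) = x j (delete_coord j r)"
      by (intro horn_faces_agree[OF compatible]) (auto simp: topspace_T face_def horn_def)
  qed auto
  show ?thesis
  proof (rule that)
    show "continuous_map (subtopology (simplex_top n) (horn n k)) M h"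
      using \<open>continuous_map T M h\<close> by (simp add: T_def)
    fix r i assume "r \<in> horn n k" "i \<le> n" "i \<noteq> k" "r i = 0"
    then show "h r = x i (delete_coord i r)"
      using h[of i r] by (simp add: topspace_T face_def)
  qed
qed

lemma horn_pasting_lies_over:
  assumes r: "r \<in> horn n k"
    and h: "\<And>r i. r \<in> horn n k \<Longrightarrow> i \<le> n \<Longrightarrow> i \<noteq> k \<Longrightarrow> r i = 0 \<Longrightarrow>
              h r = x i (delete_coord i r)"
    and y_faces: "\<And>i. i \<le> n \<Longrightarrow> i \<noteq> k \<Longrightarrow> singular_face n i y = sing_map (n - 1) p (x i)"
  shows "p (h r) = y r"
proof -
  obtain i where i: "i \<le> n" "i \<noteq> k" "r i = 0" and "r \<in> standard_simplex n"
    using r by (auto simp: horn_def)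
  then have u: "delete_coord i r \<in> standard_simplex (n - 1)"
    using delete_coord_in_standard_simplex by blast
  have "y r = singular_face n i y (delete_coord i r)"
    using u simplical_face_delete_coord[where s = r and i = i, OF \<open>r i = 0\<close>]
    by (simp add: singular_face_def)
  also have "\<dots> = p (x i (delete_coord i r))"
    using y_faces i u by (simp add: sing_map_def)
  finally show ?thesis
    using h[OF r i] by simp
qed

lemma singular_face_restrict:
  assumes "1 \<le> n" "i \<le> n" "x \<in> extensional (standard_simplex (n - 1))"
    and "\<And>u. u \<in> standard_simplex (n - 1) \<Longrightarrow> z (simplical_face i u) = x u"
  shows "singular_face n i (restrict z (standard_simplex n)) = x"
proof
  fix u
  show "singular_face n i (restrict z (standard_simplex n)) u = x u"
    using assms simplical_face_in_standard_simplex[of n i u]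
    by (cases "u \<in> standard_simplex (n - 1)") (auto simp: singular_face_def extensional_def)
qed

lemma kan_fibration_sing_if_horn_lifting:
  assumes lift: "\<And>n k h y. \<lbrakk>1 \<le> n; k \<le> n;
      continuous_map (subtopology (simplex_top n) (horn n k)) M h;
      continuous_map (simplex_top n) N y; \<And>r. r \<in> horn n k \<Longrightarrow> p (h r) = y r\<rbrakk>
      \<Longrightarrow> \<exists>z. continuous_map (simplex_top n) M z \<and> (\<forall>r \<in> horn n k. z r = h r)
             \<and> (\<forall>s \<in> standard_simplex n. p (z s) = y s)"
  shows "kan_fibration_sing M N p"
  unfolding kan_fibration_sing_def
proof (intro allI impI)
  fix n k x y
  assume n: "1 \<le> n" and k: "k \<le> n"
    and x: "\<forall>i\<le>n. i \<noteq> k \<longrightarrow> singular_simplex (n - 1) M (x i)"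
    and compatible: "\<forall>i j. i < j \<longrightarrow> j \<le> n \<longrightarrow> i \<noteq> k \<longrightarrow> j \<noteq> k \<longrightarrow>
            singular_face (n - 1) i (x j) = singular_face (n - 1) (j - 1) (x i)"
    and y: "singular_simplex n N y"
    and y_faces: "\<forall>i\<le>n. i \<noteq> k \<longrightarrow> singular_face n i y = sing_map (n - 1) p (x i)"
  have x_cont: "\<And>i. i \<le> n \<Longrightarrow> i \<noteq> k \<Longrightarrow> continuous_map (simplex_top (n - 1)) M (x i)"
    using x by (simp add: singular_simplex_iff_continuous_map)
  have x_compatible: "\<And>i j. i < j \<Longrightarrow> j \<le> n \<Longrightarrow> i \<noteq> k \<Longrightarrow> j \<noteq> k \<Longrightarrow>
      singular_face (n - 1) i (x j) = singular_face (n - 1) (j - 1) (x i)"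
    using compatible by blast
  have y_faces': "\<And>i. i \<le> n \<Longrightarrow> i \<noteq> k \<Longrightarrow> singular_face n i y = sing_map (n - 1) p (x i)"
    using y_faces by blast
  obtain h where h: "continuous_map (subtopology (simplex_top n) (horn n k)) M h"
    and h_face: "\<And>r i. r \<in> horn n k \<Longrightarrow> i \<le> n \<Longrightarrow> i \<noteq> k \<Longrightarrow> r i = 0 \<Longrightarrow>
                   h r = x i (delete_coord i r)"
    using horn_pasting[where k = k, OF x_cont x_compatible] by blast
  have "continuous_map (simplex_top n) N y"
    using y by (simp add: singular_simplex_iff_continuous_map)
  moreover have "p (h r) = y r" if "r \<in> horn n k" for r
    by (rule horn_pasting_lies_over[OF that h_face y_faces'])
  ultimately obtain z where z: "continuous_map (simplex_top n) M z"
    and z_horn: "\<forall>r \<in> horn n k. z r = h r" and z_lifts: "\<forall>s \<in> standard_simplex n. p (z s) = y s"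
    using lift[OF n k h] by blast
  have "singular_simplex n M (restrict z (standard_simplex n))"
    using z by (simp add: singular_simplex_iff_continuous_map continuous_map_eq[of _ _ z])
  moreover have "singular_face n i (restrict z (standard_simplex n)) = x i" if "i \<le> n" "i \<noteq> k" for i
  proof (rule singular_face_restrict[OF n that(1)])
    show "x i \<in> extensional (standard_simplex (n - 1))"
      using x that by (simp add: singular_simplex_def)
    fix u assume "u \<in> standard_simplex (n - 1)"
    then have "simplical_face i u \<in> horn n k"
      by (rule simplical_face_in_horn[OF n that])
    then show "z (simplical_face i u) = x i u"
      using z_horn h_face[of "simplical_face i u" i] that by simp
  qed
  moreover have "sing_map n p (restrict z (standard_simplex n)) = y"
    using z_lifts y by (auto simp: fun_eq_iff sing_map_def singular_simplex_def extensional_def)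
  ultimately show "\<exists>z. singular_simplex n M z \<and> (\<forall>i\<le>n. i \<noteq> k \<longrightarrow> singular_face n i z = x i)
      \<and> sing_map n p z = y"
    by blast
qed

text \<open>Moving \<open>s\<close> in the direction \<open>-horn_direction n k\<close> lowers all coordinates other than
  \<open>k\<close> at the same speed; stopping when the smallest of them vanishes retracts \<open>\<Delta>\<^sup>n\<close> onto
  \<open>\<Lambda>\<^sup>n\<^sub>k\<close>.\<close>

definition horn_min :: "nat \<Rightarrow> nat \<Rightarrow> (nat \<Rightarrow> real) \<Rightarrow> real"
  where "horn_min n k s = Min (s ` ({..n} - {k}))"

definition horn_direction :: "nat \<Rightarrow> nat \<Rightarrow> nat \<Rightarrow> real"
  where "horn_direction n k i = (if i = k then - real n else if i \<le> n then 1 else 0)"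

definition horn_retraction :: "nat \<Rightarrow> nat \<Rightarrow> (nat \<Rightarrow> real) \<Rightarrow> nat \<Rightarrow> real"
  where "horn_retraction n k s = (\<lambda>i. s i - horn_min n k s * horn_direction n k i)"

lemma horn_min_le: "i \<le> n \<Longrightarrow> i \<noteq> k \<Longrightarrow> horn_min n k s \<le> s i"
  unfolding horn_min_def by (rule Min_le) auto

lemma horn_min_attained:
  assumes "1 \<le> n"
  obtains i where "i \<le> n" "i \<noteq> k" "s i = horn_min n k s"
proof -
  have "{..n} - {k} \<noteq> {}"
    using assms by (cases "k = 0") auto
  then have "horn_min n k s \<in> s ` ({..n} - {k})"
    unfolding horn_min_def by (intro Min_in) auto
  then obtain i where "i \<in> {..n} - {k}" "horn_min n k s = s i"
    by blast
  with that show ?thesis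
    by auto
qed

lemma horn_min_nonneg:
  assumes "s \<in> standard_simplex n" "1 \<le> n"
  shows "0 \<le> horn_min n k s"
proof -
  obtain i where "s i = horn_min n k s"
    using horn_min_attained[OF assms(2)] by blast
  moreover have "0 \<le> s i"
    using assms(1) by (simp add: standard_simplex_def)
  ultimately show ?thesis
    by simp
qed

lemma horn_min_bound:
  assumes s: "s \<in> standard_simplex n" and k: "k \<le> n"
  shows "real n * horn_min n k s + s k \<le> 1"
proof -
  have "real n * horn_min n k s = (\<Sum>i\<in>{..n} - {k}. horn_min n k s)"
    using k by simp
  also have "\<dots> \<le> (\<Sum>i\<in>{..n} - {k}. s i)"
    by (intro sum_mono horn_min_le) auto
  also have "\<dots> = 1 - s k"
    using s k by (simp add: sum_diff1 standard_simplex_def)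
  finally show ?thesis
    by simp
qed

lemma horn_min_le_one:
  assumes "s \<in> standard_simplex n" "1 \<le> n" "k \<le> n"
  shows "horn_min n k s \<le> 1"
proof -
  have "horn_min n k s \<le> real n * horn_min n k s"
    using mult_right_mono[of 1 "real n" "horn_min n k s"] assms(2) horn_min_nonneg[OF assms(1,2)]
    by simp
  also have "\<dots> \<le> 1 - s k"
    using horn_min_bound[OF assms(1,3)] by simp
  also have "\<dots> \<le> 1"
    using assms(1) by (simp add: standard_simplex_def)
  finally show ?thesis .
qed

lemma horn_min_eq_0:
  assumes "s \<in> horn n k"
  shows "horn_min n k s = 0"
proof -
  obtain i where i: "i \<le> n" "i \<noteq> k" "s i = 0" and s: "s \<in> standard_simplex n"
    using assms by (auto simp: horn_def)
  have "0 \<le> horn_min n k s"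
    unfolding horn_min_def using i s by (intro Min.boundedI) (auto simp: standard_simplex_def)
  then show ?thesis
    using horn_min_le[OF i(1,2), of s] i(3) by simp
qed

lemma sum_horn_direction: "k \<le> n \<Longrightarrow> (\<Sum>i\<le>n. horn_direction n k i) = 0"
proof -
  assume k: "k \<le> n"
  have "(\<Sum>i\<le>n. horn_direction n k i) = horn_direction n k k + (\<Sum>i\<in>{..n} - {k}. 1)"
    using k by (simp add: sum.remove horn_direction_def)
  then show ?thesis
    using k by (simp add: horn_direction_def)
qed

lemma shift_along_horn_direction_in_standard_simplex:
  assumes s: "s \<in> standard_simplex n" and k: "k \<le> n"
    and \<mu>: "0 \<le> \<mu>" "\<mu> \<le> horn_min n k s"
  shows "(\<lambda>i. s i - \<mu> * horn_direction n k i) \<in> standard_simplex n"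
proof -
  have s01: "0 \<le> s i" "s i \<le> 1" for i
    using s by (simp_all add: standard_simplex_def)
  have "real n * \<mu> \<le> real n * horn_min n k s"
    using \<mu> by (simp add: mult_left_mono)
  then have bound: "real n * \<mu> + s k \<le> 1"
    using horn_min_bound[OF s k] by simp
  have "0 \<le> s i - \<mu> * horn_direction n k i \<and> s i - \<mu> * horn_direction n k i \<le> 1" for i
  proof (cases "i = k")
    case True
    have "0 \<le> real n * \<mu>"
      using \<mu> by simp
    then show ?thesis
      using True bound s01[of k] by (simp add: horn_direction_def mult.commute)
  next
    case False
    then show ?thesis
      using horn_min_le[of i n k s] s01[of i] \<mu>
      by (cases "i \<le> n") (simp_all add: horn_direction_def)
  qed
  moreover have "s i - \<mu> * horn_direction n k i = 0" if "n < i" for i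
    using s that k by (simp add: standard_simplex_def horn_direction_def)
  moreover have "(\<Sum>i\<le>n. s i - \<mu> * horn_direction n k i) = 1"
    using s sum_horn_direction[OF k]
    by (simp add: sum_subtractf sum_distrib_left[symmetric] standard_simplex_def)
  ultimately show ?thesis
    by (simp add: standard_simplex_def)
qed

lemma horn_retraction_in_horn:
  assumes s: "s \<in> standard_simplex n" and "1 \<le> n" "k \<le> n"
  shows "horn_retraction n k s \<in> horn n k"
proof -
  obtain i where "i \<le> n" "i \<noteq> k" "s i = horn_min n k s"
    using horn_min_attained[OF \<open>1 \<le> n\<close>] by blast
  moreover have "horn_retraction n k s \<in> standard_simplex n"
    unfolding horn_retraction_def
    using assms horn_min_nonneg by (intro shift_along_horn_direction_in_standard_simplex) auto
  ultimately show ?thesis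
    by (auto simp: horn_def horn_retraction_def horn_direction_def)
qed

lemma horn_retraction_eq_self: "s \<in> horn n k \<Longrightarrow> horn_retraction n k s = s"
  by (simp add: horn_retraction_def horn_min_eq_0)

lemma continuous_map_Min:
  assumes "finite I" "I \<noteq> {}" "\<And>i. i \<in> I \<Longrightarrow> continuous_map T euclideanreal (f i)"
  shows "continuous_map T euclideanreal (\<lambda>x. Min ((\<lambda>i. f i x) ` I))"
  using assms
proof (induction I rule: finite_ne_induct)
  case (insert i I)
  then show ?case
    by (simp add: Min_insert continuous_map_real_min)
qed simp

lemma continuous_map_horn_min:
  assumes "1 \<le> n"
  shows "continuous_map (simplex_top n) euclideanreal (horn_min n k)"
proof -
  have "{..n} - {k} \<noteq> {}"
    using assms by (cases "k = 0") auto
  then show ?thesis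
    unfolding horn_min_def
    by (intro continuous_map_Min[where f = "\<lambda>i s. s i"] continuous_map_simplex_top_coordinate) auto
qed

lemma continuous_map_shift_along_horn_direction:
  assumes k: "k \<le> n" and \<sigma>: "continuous_map T (simplex_top n) \<sigma>"
    and \<mu>: "continuous_map T euclideanreal \<mu>"
    and bounds: "\<And>x. x \<in> topspace T \<Longrightarrow> 0 \<le> \<mu> x \<and> \<mu> x \<le> horn_min n k (\<sigma> x)"
  shows "continuous_map T (simplex_top n) (\<lambda>x i. \<sigma> x i - \<mu> x * horn_direction n k i)"
proof (rule continuous_map_into_simplex_top)
  fix i
  have "continuous_map T euclideanreal (\<lambda>x. \<sigma> x i)"
    using continuous_map_compose[OF \<sigma> continuous_map_simplex_top_coordinate] by (simp add: o_def)
  then show "continuous_map T euclideanreal (\<lambda>x. \<sigma> x i - \<mu> x * horn_direction n k i)"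
    by (intro continuous_intros \<mu>)
next
  fix x assume x: "x \<in> topspace T"
  then have "\<sigma> x \<in> standard_simplex n"
    using continuous_map_funspace[OF \<sigma>] by (simp add: Pi_iff)
  then show "(\<lambda>i. \<sigma> x i - \<mu> x * horn_direction n k i) \<in> standard_simplex n"
    using bounds[OF x] by (intro shift_along_horn_direction_in_standard_simplex[OF _ k]) auto
qed

lemma continuous_map_horn_retraction:
  assumes n: "1 \<le> n" and k: "k \<le> n"
  shows "continuous_map (simplex_top n) (subtopology (simplex_top n) (horn n k)) (horn_retraction n k)"
proof -
  have "continuous_map (simplex_top n) (simplex_top n) (\<lambda>s i. s i - horn_min n k s * horn_direction n k i)"
    using horn_min_nonneg[OF _ n]
    by (intro continuous_map_shift_along_horn_direction[OF k] continuous_map_horn_min[OF n]) simp_all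
  then show ?thesis
    using horn_retraction_in_horn[OF _ n k]
    by (simp add: continuous_map_in_subtopology image_subset_iff horn_retraction_def[abs_def])
qed

section \<open>The mapping path space\<close>

abbreviation unit_interval :: "real topology"
  where "unit_interval \<equiv> top_of_set {0..1}"

lemma locally_compact_space_unit_interval: "locally_compact_space unit_interval"
  by (simp add: compact_imp_locally_compact_space compact_space_subtopology compactin_euclidean_iff)

lemma Hausdorff_space_unit_interval: "Hausdorff_space unit_interval"
  by (simp add: Hausdorff_space_subtopology)

text \<open>The paths are required to stay in one fibre of \<open>\<phi>Y\<close>, i.e. to be filtered paths; this
  makes the mapping path space the fibre product \<open>X \<times>\<^sub>Y Y\<^sup>I\<close> in strongly filtered
  spaces.\<close>

definition mapping_path_set ::
  "'a topology \<Rightarrow> ('a \<Rightarrow> 'p \<Rightarrow> real) \<Rightarrow> 'b topology \<Rightarrow> ('b \<Rightarrow> 'p \<Rightarrow> real) \<Rightarrow> ('a \<Rightarrow> 'b)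
     \<Rightarrow> ('a \<times> (real \<Rightarrow> 'b)) set"
  where "mapping_path_set X \<phi>X Y \<phi>Y f =
    {(x, \<gamma>). x \<in> topspace X \<and> \<gamma> \<in> topspace (compact_open unit_interval Y) \<and> \<gamma> 0 = f x
       \<and> (\<forall>\<tau> \<in> {0..1}. \<phi>Y (\<gamma> \<tau>) = \<phi>X x)}"

definition mapping_path_space ::
  "'a topology \<Rightarrow> ('a \<Rightarrow> 'p \<Rightarrow> real) \<Rightarrow> 'b topology \<Rightarrow> ('b \<Rightarrow> 'p \<Rightarrow> real) \<Rightarrow> ('a \<Rightarrow> 'b)
     \<Rightarrow> ('a \<times> (real \<Rightarrow> 'b)) topology"
  where "mapping_path_space X \<phi>X Y \<phi>Y f =
    dtop (subtopology (prod_topology X (compact_open unit_interval Y)) (mapping_path_set X \<phi>X Y \<phi>Y f))"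

lemma mapping_path_setD:
  assumes "z \<in> mapping_path_set X \<phi>X Y \<phi>Y f"
  shows "fst z \<in> topspace X" "continuous_map unit_interval Y (snd z)"
    "snd z \<in> extensional {0..1}" "snd z 0 = f (fst z)"
    "\<And>\<tau>. \<tau> \<in> {0..1} \<Longrightarrow> \<phi>Y (snd z \<tau>) = \<phi>X (fst z)"
  using assms by (auto simp: mapping_path_set_def topspace_compact_open)

lemma mapping_path_setI:
  assumes "x \<in> topspace X" "continuous_map unit_interval Y \<gamma>" "\<gamma> 0 = f x"
    and "\<And>\<tau>. \<tau> \<in> {0..1} \<Longrightarrow> \<phi>Y (\<gamma> \<tau>) = \<phi>X x"
  shows "(x, restrict \<gamma> {0..1}) \<in> mapping_path_set X \<phi>X Y \<phi>Y f"
proof -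
  have "continuous_map unit_interval Y (restrict \<gamma> {0..1})"
    using assms(2) by (rule continuous_map_eq) simp
  then show ?thesis
    using assms by (simp add: mapping_path_set_def topspace_compact_open)
qed

lemma topspace_mapping_path_space [simp]:
  "topspace (mapping_path_space X \<phi>X Y \<phi>Y f) = mapping_path_set X \<phi>X Y \<phi>Y f"
  by (auto simp: mapping_path_space_def mapping_path_set_def)

lemma continuous_map_mapping_path_space_prod:
  "continuous_map (mapping_path_space X \<phi>X Y \<phi>Y f)
     (prod_topology X (compact_open unit_interval Y)) (\<lambda>z. z)"
  unfolding mapping_path_space_def
  by (intro continuous_map_from_dtop_if_continuous_map continuous_map_from_subtopology
      continuous_map_id[unfolded id_def])

lemma continuous_map_mapping_path_space_fst:
  "continuous_map (mapping_path_space X \<phi>X Y \<phi>Y f) X fst"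
  using continuous_map_compose[OF continuous_map_mapping_path_space_prod continuous_map_fst]
  by (simp add: o_def)

lemma continuous_map_mapping_path_space_snd:
  "continuous_map (mapping_path_space X \<phi>X Y \<phi>Y f) (compact_open unit_interval Y) snd"
  using continuous_map_compose[OF continuous_map_mapping_path_space_prod continuous_map_snd]
  by (simp add: o_def)

lemma continuous_map_mapping_path_space_paths:
  assumes "continuous_map W (mapping_path_space X \<phi>X Y \<phi>Y f) g"
  shows "continuous_map (prod_topology W unit_interval) Y (\<lambda>(w, \<tau>). snd (g w) \<tau>)"
proof -
  have "continuous_map W (compact_open unit_interval Y) (snd \<circ> g)"
    using assms continuous_map_mapping_path_space_snd by (rule continuous_map_compose)
  then have "continuous_map (prod_topology W unit_interval) Y (\<lambda>(w, \<tau>). (snd \<circ> g) w \<tau>)"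
    by (intro continuous_map_uncurry_compact_open locally_compact_space_unit_interval
        Hausdorff_space_unit_interval)
  then show ?thesis
    by (simp add: o_def)
qed

lemma continuous_map_into_mapping_path_space:
  assumes W: "delta_generated W"
    and g: "\<And>w. w \<in> topspace W \<Longrightarrow> g w \<in> mapping_path_set X \<phi>X Y \<phi>Y f"
    and base: "continuous_map W X (\<lambda>w. fst (g w))"
    and paths: "continuous_map (prod_topology W unit_interval) Y (\<lambda>(w, \<tau>). snd (g w) \<tau>)"
  shows "continuous_map W (mapping_path_space X \<phi>X Y \<phi>Y f) g"
proof -
  have "continuous_map W (compact_open unit_interval Y)
      (\<lambda>w. restrict (\<lambda>\<tau>. (\<lambda>(w, \<tau>). snd (g w) \<tau>) (w, \<tau>)) (topspace unit_interval))"
    using paths by (rule continuous_map_curry_compact_open)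
  moreover have "restrict (\<lambda>\<tau>. (\<lambda>(w, \<tau>). snd (g w) \<tau>) (w, \<tau>)) (topspace unit_interval) = (snd \<circ> g) w"
    if "w \<in> topspace W" for w
    using mapping_path_setD(3)[OF g[OF that]] by (simp add: extensional_restrict)
  ultimately have "continuous_map W (compact_open unit_interval Y) (snd \<circ> g)"
    by (rule continuous_map_eq)
  moreover have "continuous_map W X (fst \<circ> g)"
    using base by (simp add: o_def)
  ultimately have "continuous_map W (prod_topology X (compact_open unit_interval Y)) g"
    by (simp add: continuous_map_pairwise)
  then have "continuous_map W (subtopology (prod_topology X (compact_open unit_interval Y))
      (mapping_path_set X \<phi>X Y \<phi>Y f)) g"
    using g by (simp add: continuous_map_in_subtopology image_subset_iff)
  then show ?thesis
    unfolding mapping_path_space_def by (rule continuous_map_into_dtop[OF W])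
qed

lemma strongly_filtered_mapping_path_space:
  assumes "strongly_filtered X \<phi>X"
  shows "strongly_filtered (mapping_path_space X \<phi>X Y \<phi>Y f) (\<lambda>z. \<phi>X (fst z))"
  using assms continuous_map_compose[OF continuous_map_mapping_path_space_fst]
  by (auto simp: strongly_filtered_def mapping_path_space_def delta_generated_dtop o_def)

lemma filtered_map_mapping_path_space_fst:
  "filtered_map (mapping_path_space X \<phi>X Y \<phi>Y f) (\<lambda>z. \<phi>X (fst z)) X \<phi>X fst"
  by (simp add: filtered_map_def continuous_map_mapping_path_space_fst)

lemma filtered_map_path_endpoint:
  "filtered_map (mapping_path_space X \<phi>X Y \<phi>Y f) (\<lambda>z. \<phi>X (fst z)) Y \<phi>Y (\<lambda>z. snd z 1)"
  unfolding filtered_map_def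
proof
  show "continuous_map (mapping_path_space X \<phi>X Y \<phi>Y f) Y (\<lambda>z. snd z 1)"
    using continuous_map_compose[OF continuous_map_mapping_path_space_snd
        continuous_map_compact_open_eval[of 1 unit_interval Y]]
    by (simp add: o_def)
qed (simp add: mapping_path_setD)

lemma filtered_map_constant_path:
  assumes X: "strongly_filtered X \<phi>X" and f: "filtered_map X \<phi>X Y \<phi>Y f"
  shows "filtered_map X \<phi>X (mapping_path_space X \<phi>X Y \<phi>Y f) (\<lambda>z. \<phi>X (fst z))
           (\<lambda>x. (x, restrict (\<lambda>\<tau>. f x) {0..1}))"
  unfolding filtered_map_def
proof
  have fc: "continuous_map X Y f" and f\<phi>: "\<And>x. x \<in> topspace X \<Longrightarrow> \<phi>Y (f x) = \<phi>X x"
    using f by (auto simp: filtered_map_def)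
  have "(x, restrict (\<lambda>\<tau>. f x) {0..1}) \<in> mapping_path_set X \<phi>X Y \<phi>Y f" if x: "x \<in> topspace X" for x
    using x f\<phi> continuous_map_funspace[OF fc] by (intro mapping_path_setI) auto
  moreover have "continuous_map (prod_topology X unit_interval) Y
      (\<lambda>(x, \<tau>). restrict (\<lambda>\<tau>. f x) {0..1} \<tau>)"
    using continuous_map_compose[OF continuous_map_fst fc]
    by (rule continuous_map_eq) auto
  ultimately show "continuous_map X (mapping_path_space X \<phi>X Y \<phi>Y f)
      (\<lambda>x. (x, restrict (\<lambda>\<tau>. f x) {0..1}))"
    using X by (intro continuous_map_into_mapping_path_space) (auto simp: strongly_filtered_def)
qed simp

definition path_contraction :: "('a \<times> (real \<Rightarrow> 'b)) \<times> real \<Rightarrow> 'a \<times> (real \<Rightarrow> 'b)"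
  where "path_contraction p = (fst (fst p), restrict (\<lambda>\<tau>. snd (fst p) (\<tau> * snd p)) {0..1})"

lemma path_contraction_in_mapping_path_set:
  assumes z: "z \<in> mapping_path_set X \<phi>X Y \<phi>Y f" and t: "t \<in> {0..1}"
  shows "path_contraction (z, t) \<in> mapping_path_set X \<phi>X Y \<phi>Y f"
proof -
  have scale: "\<tau> * t \<in> {0..1}" if "\<tau> \<in> {0..1}" for \<tau>
    using that t by (auto simp: mult_le_one)
  then have "continuous_map unit_interval unit_interval (\<lambda>\<tau>. \<tau> * t)"
    by (auto simp: continuous_map_in_subtopology intro!: continuous_intros)
  then have "continuous_map unit_interval Y (snd z \<circ> (\<lambda>\<tau>. \<tau> * t))"
    using mapping_path_setD(2)[OF z] by (rule continuous_map_compose)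
  then show ?thesis
    unfolding path_contraction_def
    using mapping_path_setD[OF z] scale by (intro mapping_path_setI) (simp_all add: o_def)
qed

lemma continuous_map_path_contraction:
  "continuous_map (dtop (prod_topology (mapping_path_space X \<phi>X Y \<phi>Y f) unit_interval))
     (mapping_path_space X \<phi>X Y \<phi>Y f) path_contraction"
proof (rule continuous_map_from_dtop)
  let ?Z = "mapping_path_space X \<phi>X Y \<phi>Y f"
  show "path_contraction \<in> topspace (prod_topology ?Z unit_interval) \<rightarrow> topspace ?Z"
    using path_contraction_in_mapping_path_set by fastforce
  fix n \<sigma> assume \<sigma>: "continuous_map (simplex_top n) (prod_topology ?Z unit_interval) \<sigma>"
  then have \<sigma>1: "continuous_map (simplex_top n) ?Z (fst \<circ> \<sigma>)"
    and \<sigma>2: "continuous_map (simplex_top n) unit_interval (snd \<circ> \<sigma>)"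
    by (simp_all add: continuous_map_pairwise)
  show "continuous_map (simplex_top n) ?Z (path_contraction \<circ> \<sigma>)"
  proof (rule continuous_map_into_mapping_path_space[OF delta_generated_simplex_top])
    fix s assume "s \<in> topspace (simplex_top n)"
    then show "(path_contraction \<circ> \<sigma>) s \<in> mapping_path_set X \<phi>X Y \<phi>Y f"
      using continuous_map_funspace[OF \<sigma>] path_contraction_in_mapping_path_set
      by (force simp: Pi_iff)
  next
    show "continuous_map (simplex_top n) X (\<lambda>s. fst ((path_contraction \<circ> \<sigma>) s))"
      using continuous_map_compose[OF \<sigma>1 continuous_map_mapping_path_space_fst]
      by (simp add: path_contraction_def o_def)
  next
    let ?T = "prod_topology (simplex_top n) unit_interval"
    have "continuous_map ?T euclideanreal (\<lambda>p. snd (\<sigma> (fst p)))"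
      using continuous_map_into_fulltopology[OF continuous_map_compose[OF continuous_map_fst \<sigma>2]]
      by (simp add: o_def)
    then have "continuous_map ?T euclideanreal (\<lambda>p. snd p * snd (\<sigma> (fst p)))"
      by (intro continuous_map_real_mult continuous_map_into_fulltopology[OF continuous_map_snd])
    moreover have "snd p * snd (\<sigma> (fst p)) \<in> {0..1}" if "p \<in> topspace ?T" for p
      using that continuous_map_funspace[OF \<sigma>2] by (auto simp: Pi_iff mult_le_one)
    ultimately have "continuous_map ?T ?T (\<lambda>p. (fst p, snd p * snd (\<sigma> (fst p))))"
      by (simp add: continuous_map_pairwise o_def continuous_map_in_subtopology image_subset_iff
          continuous_map_fst)
    then have "continuous_map ?T Y
        ((\<lambda>(s, \<tau>). snd ((fst \<circ> \<sigma>) s) \<tau>) \<circ> (\<lambda>p. (fst p, snd p * snd (\<sigma> (fst p)))))"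
      using continuous_map_mapping_path_space_paths[OF \<sigma>1] by (rule continuous_map_compose)
    then show "continuous_map ?T Y (\<lambda>(s, \<tau>). snd ((path_contraction \<circ> \<sigma>) s) \<tau>)"
      by (rule continuous_map_eq) (auto simp: path_contraction_def o_def)
  qed
qed

lemma filtered_homotopic_path_contraction:
  "filtered_homotopic (mapping_path_space X \<phi>X Y \<phi>Y f) (\<lambda>z. \<phi>X (fst z))
     ((\<lambda>x. (x, restrict (\<lambda>\<tau>. f x) {0..1})) \<circ> fst) id"
  unfolding filtered_homotopic_def filtered_map_def
proof (intro exI conjI ballI)
  show "continuous_map (dtop (prod_topology (mapping_path_space X \<phi>X Y \<phi>Y f) unit_interval))
      (mapping_path_space X \<phi>X Y \<phi>Y f) path_contraction"
    by (rule continuous_map_path_contraction)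
  fix z assume "z \<in> topspace (mapping_path_space X \<phi>X Y \<phi>Y f)"
  then have "z \<in> mapping_path_set X \<phi>X Y \<phi>Y f"
    by simp
  note z = mapping_path_setD(3,4)[OF this]
  then show "path_contraction (z, 0) = ((\<lambda>x. (x, restrict (\<lambda>\<tau>. f x) {0..1})) \<circ> fst) z"
    and "path_contraction (z, 1) = id z"
    by (simp_all add: path_contraction_def extensional_restrict)
qed (auto simp: path_contraction_def)

section \<open>Lifting along the endpoint map\<close>

text \<open>Let \<open>m = horn_min n k s\<close>. The lifted path at \<open>(s, w)\<close> first runs through the path
  \<open>P s w\<close>, reparametrised to \<open>[0, 1 - m / 2]\<close>, and then follows \<open>y\<close> along the segment
  from \<open>horn_retraction n k s\<close> back to \<open>s\<close>. On the horn \<open>m = 0\<close>, so nothing changes there.\<close>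

definition lifted_path ::
  "nat \<Rightarrow> nat \<Rightarrow> ((nat \<Rightarrow> real) \<Rightarrow> 'w \<Rightarrow> real \<Rightarrow> 'b) \<Rightarrow> ((nat \<Rightarrow> real) \<Rightarrow> 'w \<Rightarrow> 'b)
     \<Rightarrow> (nat \<Rightarrow> real) \<Rightarrow> 'w \<Rightarrow> real \<Rightarrow> 'b"
  where "lifted_path n k P y s w \<tau> =
    (if 1 - horn_min n k s / 2 \<le> \<tau> then y (\<lambda>i. s i - 2 * (1 - \<tau>) * horn_direction n k i) w
     else P s w (\<tau> / (1 - horn_min n k s / 2)))"

context
  fixes n k :: nat and s :: "nat \<Rightarrow> real"
  assumes s: "s \<in> standard_simplex n" and n: "1 \<le> n" and k: "k \<le> n"
begin

lemma lifted_path_0: "lifted_path n k P y s w 0 = P s w 0"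
  using horn_min_le_one[OF s n k] by (simp add: lifted_path_def)

lemma lifted_path_1: "lifted_path n k P y s w 1 = y s w"
  using horn_min_nonneg[OF s n] by (simp add: lifted_path_def)

lemma lifted_path_fibre:
  assumes "\<tau> \<in> {0..1}"
    and "\<And>s'. s' \<in> standard_simplex n \<Longrightarrow> Q (y s' w)" and "\<And>\<tau>. \<tau> \<in> {0..1} \<Longrightarrow> Q (P s w \<tau>)"
  shows "Q (lifted_path n k P y s w \<tau>)"
proof (cases "1 - horn_min n k s / 2 \<le> \<tau>")
  case True
  then have "(\<lambda>i. s i - 2 * (1 - \<tau>) * horn_direction n k i) \<in> standard_simplex n"
    using assms(1) by (intro shift_along_horn_direction_in_standard_simplex[OF s k]) auto
  then show ?thesis
    using True assms(2) by (simp add: lifted_path_def)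
next
  case False
  then have "\<tau> / (1 - horn_min n k s / 2) \<in> {0..1}"
    using assms(1) horn_min_le_one[OF s n k] by (auto simp: divide_simps)
  then show ?thesis
    using False assms(3) by (simp add: lifted_path_def)
qed

lemma lifted_path_in_mapping_path_set:
  assumes H: "H s w \<in> mapping_path_set X \<phi>X Y \<phi>Y f"
    and lift: "continuous_map unit_interval Y (lifted_path n k (\<lambda>s w. snd (H s w)) y s w)"
    and y: "\<And>s'. s' \<in> standard_simplex n \<Longrightarrow> \<phi>Y (y s' w) = \<phi>X (fst (H s w))"
  shows "(fst (H s w), restrict (lifted_path n k (\<lambda>s w. snd (H s w)) y s w) {0..1})
           \<in> mapping_path_set X \<phi>X Y \<phi>Y f"
proof (rule mapping_path_setI[OF mapping_path_setD(1)[OF H] lift])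
  show "lifted_path n k (\<lambda>s w. snd (H s w)) y s w 0 = f (fst (H s w))"
    using mapping_path_setD(4)[OF H] by (simp add: lifted_path_0)
  show "\<phi>Y (lifted_path n k (\<lambda>s w. snd (H s w)) y s w \<tau>) = \<phi>X (fst (H s w))"
    if "\<tau> \<in> {0..1}" for \<tau>
    using y mapping_path_setD(5)[OF H]
    by (rule lifted_path_fibre[OF that, where Q = "\<lambda>b. \<phi>Y b = \<phi>X (fst (H s w))"])
qed

end

lemma restrict_lifted_path_horn:
  assumes "s \<in> horn n k" "y s w = P s w 1" "P s w \<in> extensional {0..1}"
  shows "restrict (lifted_path n k P y s w) {0..1} = P s w"
  using assms by (auto simp: fun_eq_iff lifted_path_def horn_min_eq_0 extensional_def)

lemma continuous_map_rescale_time: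
  assumes l: "continuous_map W euclideanreal l" and pos: "\<And>w. w \<in> topspace W \<Longrightarrow> 0 < l w"
  shows "continuous_map
           (subtopology (prod_topology W unit_interval)
              {x \<in> topspace (prod_topology W unit_interval). snd x \<le> l (fst x)})
           (prod_topology W unit_interval) (\<lambda>x. (fst x, snd x / l (fst x)))"
proof -
  let ?S = "subtopology (prod_topology W unit_interval)
              {x \<in> topspace (prod_topology W unit_interval). snd x \<le> l (fst x)}"
  have "continuous_map (prod_topology W unit_interval) euclideanreal (\<lambda>x. l (fst x))"
    using continuous_map_compose[OF continuous_map_fst l] by (simp add: o_def)
  then have "continuous_map ?S euclideanreal (\<lambda>x. snd x / l (fst x))"
    using pos by (intro continuous_map_from_subtopology continuous_map_real_divide
        continuous_map_into_fulltopology[OF continuous_map_snd]) force+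
  moreover have "snd x / l (fst x) \<in> {0..1}" if "x \<in> topspace ?S" for x
    using that pos[of "fst x"] by (auto simp: divide_simps)
  ultimately show ?thesis
    by (simp add: continuous_map_pairwise o_def continuous_map_in_subtopology image_subset_iff
        continuous_map_from_subtopology continuous_map_fst)
qed

lemma continuous_map_along_horn_segment:
  assumes k: "k \<le> n" and y: "continuous_map (prod_topology (simplex_top n) A) Y (\<lambda>p. y (fst p) (snd p))"
  shows "continuous_map
           (subtopology (prod_topology (prod_topology (simplex_top n) A) unit_interval)
              {x \<in> topspace (prod_topology (prod_topology (simplex_top n) A) unit_interval).
                 1 - horn_min n k (fst (fst x)) / 2 \<le> snd x})
           Y (\<lambda>x. y (\<lambda>i. fst (fst x) i - 2 * (1 - snd x) * horn_direction n k i) (snd (fst x)))"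
proof -
  let ?T = "prod_topology (prod_topology (simplex_top n) A) unit_interval"
  let ?S = "subtopology ?T {x \<in> topspace ?T. 1 - horn_min n k (fst (fst x)) / 2 \<le> snd x}"
  have "continuous_map ?T (simplex_top n) (\<lambda>x. fst (fst x))"
    using continuous_map_compose[OF continuous_map_fst continuous_map_fst] by (simp add: o_def)
  then have "continuous_map ?S (simplex_top n)
      (\<lambda>x i. fst (fst x) i - 2 * (1 - snd x) * horn_direction n k i)"
    by (intro continuous_map_shift_along_horn_direction[OF k] continuous_map_from_subtopology
        continuous_intros continuous_map_into_fulltopology[OF continuous_map_snd]) auto
  moreover have "continuous_map ?S A (\<lambda>x. snd (fst x))"
    using continuous_map_compose[OF continuous_map_fst continuous_map_snd]
    by (intro continuous_map_from_subtopology) (simp add: o_def)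
  ultimately have "continuous_map ?S (prod_topology (simplex_top n) A)
      (\<lambda>x. ((\<lambda>i. fst (fst x) i - 2 * (1 - snd x) * horn_direction n k i), snd (fst x)))"
    by (simp add: continuous_map_pairwise o_def)
  from continuous_map_compose[OF this y]
  show ?thesis
    by (simp add: o_def)
qed

lemma continuous_map_lifted_path:
  assumes n: "1 \<le> n" and k: "k \<le> n"
    and P: "continuous_map (prod_topology (prod_topology (simplex_top n) A) unit_interval) Y
              (\<lambda>x. P (fst (fst x)) (snd (fst x)) (snd x))"
    and y: "continuous_map (prod_topology (simplex_top n) A) Y (\<lambda>x. y (fst x) (snd x))"
    and compatible: "\<And>s w. s \<in> standard_simplex n \<Longrightarrow> w \<in> topspace A \<Longrightarrow>
                        P s w 1 = y (horn_retraction n k s) w"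
  shows "continuous_map (prod_topology (prod_topology (simplex_top n) A) unit_interval) Y
           (\<lambda>x. lifted_path n k P y (fst (fst x)) (snd (fst x)) (snd x))"
proof -
  let ?W = "prod_topology (simplex_top n) A"
  let ?T = "prod_topology ?W unit_interval"
  let ?l = "\<lambda>p. 1 - horn_min n k (fst p) / 2"
  have "continuous_map ?W euclideanreal (\<lambda>p. horn_min n k (fst p))"
    using continuous_map_compose[OF continuous_map_fst continuous_map_horn_min[OF n]] by (simp add: o_def)
  then have l: "continuous_map ?W euclideanreal ?l"
    by (intro continuous_intros) auto
  have l_bounds: "1 / 2 \<le> ?l p" "?l p \<le> 1" if "p \<in> topspace ?W" for p
    using that horn_min_nonneg[OF _ n] horn_min_le_one[OF _ n k] by auto
  show ?thesis
    unfolding lifted_path_def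
  proof (rule continuous_map_cases_le)
    show "continuous_map ?T euclideanreal (\<lambda>x. ?l (fst x))"
      using continuous_map_compose[OF continuous_map_fst l] by (simp add: o_def)
  next
    show "continuous_map (subtopology ?T {x \<in> topspace ?T. ?l (fst x) \<le> snd x}) Y
        (\<lambda>x. y (\<lambda>i. fst (fst x) i - 2 * (1 - snd x) * horn_direction n k i) (snd (fst x)))"
      using k y by (rule continuous_map_along_horn_segment)
  next
    have "continuous_map (subtopology ?T {x \<in> topspace ?T. snd x \<le> ?l (fst x)}) ?T
        (\<lambda>x. (fst x, snd x / ?l (fst x)))"
      using l l_bounds(1) by (intro continuous_map_rescale_time) force+
    from continuous_map_compose[OF this P]
    show "continuous_map (subtopology ?T {x \<in> topspace ?T. snd x \<le> ?l (fst x)}) Y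
        (\<lambda>x. P (fst (fst x)) (snd (fst x)) (snd x / ?l (fst x)))"
      by (simp add: o_def)
  next
    fix x assume x: "x \<in> topspace ?T" and eq: "?l (fst x) = snd x"
    then have "(\<lambda>i. fst (fst x) i - 2 * (1 - snd x) * horn_direction n k i)
        = horn_retraction n k (fst (fst x))"
      by (auto simp: horn_retraction_def)
    moreover have "snd x / ?l (fst x) = 1"
      using eq l_bounds(1)[of "fst x"] x by auto
    ultimately show "y (\<lambda>i. fst (fst x) i - 2 * (1 - snd x) * horn_direction n k i) (snd (fst x))
        = P (fst (fst x)) (snd (fst x)) (snd x / ?l (fst x))"
      using x compatible by auto
  qed (rule continuous_map_into_fulltopology[OF continuous_map_snd])
qed

lemma endpoint_lifting_prod_simplex:
  fixes H :: "(nat \<Rightarrow> real) \<Rightarrow> (nat \<Rightarrow> real) \<Rightarrow> 'a \<times> (real \<Rightarrow> 'b)"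
    and y :: "(nat \<Rightarrow> real) \<Rightarrow> (nat \<Rightarrow> real) \<Rightarrow> 'b" and \<psi> :: "(nat \<Rightarrow> real) \<Rightarrow> 'p \<Rightarrow> real"
  assumes n: "1 \<le> n" and k: "k \<le> n"
    and H: "continuous_map (prod_topology (simplex_top n) (simplex_top c))
              (mapping_path_space X \<phi>X Y \<phi>Y f) (\<lambda>p. H (fst p) (snd p))"
    and H_fibre: "\<And>s w. s \<in> standard_simplex n \<Longrightarrow> w \<in> standard_simplex c \<Longrightarrow>
                    \<phi>X (fst (H s w)) = \<psi> w"
    and y: "continuous_map (prod_topology (simplex_top n) (simplex_top c)) Y (\<lambda>p. y (fst p) (snd p))"
    and y_fibre: "\<And>s w. s \<in> standard_simplex n \<Longrightarrow> w \<in> standard_simplex c \<Longrightarrow> \<phi>Y (y s w) = \<psi> w"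
    and compatible: "\<And>s w. s \<in> standard_simplex n \<Longrightarrow> w \<in> standard_simplex c \<Longrightarrow>
                        snd (H s w) 1 = y (horn_retraction n k s) w"
  obtains L where "continuous_map (prod_topology (simplex_top n) (simplex_top c))
                     (mapping_path_space X \<phi>X Y \<phi>Y f) L"
    and "\<And>s w. fst (L (s, w)) = fst (H s w)"
    and "\<And>r w. r \<in> horn n k \<Longrightarrow> w \<in> standard_simplex c \<Longrightarrow> L (r, w) = H r w"
    and "\<And>s w. s \<in> standard_simplex n \<Longrightarrow> snd (L (s, w)) 1 = y s w"
proof -
  let ?W = "prod_topology (simplex_top n) (simplex_top c)"
  let ?S = "mapping_path_set X \<phi>X Y \<phi>Y f"
  let ?lift = "lifted_path n k (\<lambda>s w. snd (H s w)) y"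
  define L where "L p = (fst (H (fst p) (snd p)), restrict (?lift (fst p) (snd p)) {0..1})" for p
  have H_in: "H s w \<in> ?S" if "s \<in> standard_simplex n" "w \<in> standard_simplex c" for s w
    using Pi_mem[OF continuous_map_funspace[OF H], of "(s, w)"] that by simp
  have "continuous_map (prod_topology ?W unit_interval) Y
      (\<lambda>x. snd (H (fst (fst x)) (snd (fst x))) (snd x))"
    using continuous_map_mapping_path_space_paths[OF H] by (simp add: case_prod_unfold)
  then have lift: "continuous_map (prod_topology ?W unit_interval) Y
      (\<lambda>x. ?lift (fst (fst x)) (snd (fst x)) (snd x))"
    using compatible by (intro continuous_map_lifted_path[OF n k] y) auto
  have "L p \<in> ?S" if p: "p \<in> topspace ?W" for p
  proof -
    obtain s w where sw: "p = (s, w)" "s \<in> standard_simplex n" "w \<in> standard_simplex c"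
      using p by auto
    have "continuous_map unit_interval Y (?lift s w)"
      using continuous_map_o_Pair[OF lift p] by (simp add: sw o_def)
    moreover have "\<phi>Y (y s' w) = \<phi>X (fst (H s w))" if "s' \<in> standard_simplex n" for s'
      using that sw H_fibre y_fibre by simp
    ultimately show ?thesis
      unfolding L_def sw(1) fst_conv snd_conv
      by (intro lifted_path_in_mapping_path_set[OF sw(2) n k] H_in sw(2,3))
  qed
  moreover have "continuous_map ?W X (\<lambda>p. fst (L p))"
    using continuous_map_compose[OF H continuous_map_mapping_path_space_fst] by (simp add: L_def o_def)
  moreover have "continuous_map (prod_topology ?W unit_interval) Y (\<lambda>(p, \<tau>). snd (L p) \<tau>)"
    using lift by (rule continuous_map_eq) (auto simp: L_def)
  ultimately have L_cont: "continuous_map ?W (mapping_path_space X \<phi>X Y \<phi>Y f) L"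
    by (intro continuous_map_into_mapping_path_space delta_generated_prod_simplex_top)
  have L_horn: "L (r, w) = H r w" if r: "r \<in> horn n k" and w: "w \<in> standard_simplex c" for r w
  proof -
    have "r \<in> standard_simplex n"
      using r by (simp add: horn_def)
    then show ?thesis
      using compatible[of r w] w horn_retraction_eq_self[OF r] mapping_path_setD(3)[OF H_in]
      by (simp add: L_def restrict_lifted_path_horn[OF r])
  qed
  have L_end: "snd (L (s, w)) 1 = y s w" if "s \<in> standard_simplex n" for s w
    using that by (simp add: L_def lifted_path_1[OF _ n k])
  show ?thesis
    by (rule that[OF L_cont _ L_horn L_end]) (simp add: L_def)
qed

lemma horn_lifting_path_endpoint:
  fixes \<psi> :: "(nat \<Rightarrow> real) \<Rightarrow> 'p::order \<Rightarrow> real"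
  assumes n: "1 \<le> n" and k: "k \<le> n"
    and h: "continuous_map (subtopology (simplex_top n) (horn n k))
              (filtered_mapping_space (simplex_top c) \<psi> (mapping_path_space X \<phi>X Y \<phi>Y f)
                 (\<lambda>z. \<phi>X (fst z))) h"
    and y: "continuous_map (simplex_top n) (filtered_mapping_space (simplex_top c) \<psi> Y \<phi>Y) y"
    and hy: "\<And>r. r \<in> horn n k \<Longrightarrow> postcomp (simplex_top c) (\<lambda>z. snd z 1) (h r) = y r"
  shows "\<exists>z. continuous_map (simplex_top n)
              (filtered_mapping_space (simplex_top c) \<psi> (mapping_path_space X \<phi>X Y \<phi>Y f)
                 (\<lambda>z. \<phi>X (fst z))) z
           \<and> (\<forall>r \<in> horn n k. z r = h r)
           \<and> (\<forall>s \<in> standard_simplex n. postcomp (simplex_top c) (\<lambda>z. snd z 1) (z s) = y s)"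
proof -
  let ?A = "simplex_top c" and ?Z = "mapping_path_space X \<phi>X Y \<phi>Y f"
  let ?M = "filtered_mapping_space ?A \<psi> ?Z (\<lambda>z. \<phi>X (fst z))"
  define H where "H = h \<circ> horn_retraction n k"
  have "continuous_map (simplex_top n) ?M H"
    unfolding H_def using continuous_map_horn_retraction[OF n k] h by (rule continuous_map_compose)
  note H_uncurried = continuous_map_filtered_mapping_space_uncurry[OF this]
  note y_uncurried = continuous_map_filtered_mapping_space_uncurry[OF y]
  have compatible: "snd (H s w) 1 = y (horn_retraction n k s) w"
    if "s \<in> standard_simplex n" "w \<in> standard_simplex c" for s w
    using fun_cong[OF hy[OF horn_retraction_in_horn[OF that(1) n k]], of w] that(2)
    by (simp add: H_def postcomp_def)
  obtain L where L_cont: "continuous_map (prod_topology (simplex_top n) ?A) ?Z L"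
    and L_fst: "\<And>s w. fst (L (s, w)) = fst (H s w)"
    and L_horn: "\<And>r w. r \<in> horn n k \<Longrightarrow> w \<in> standard_simplex c \<Longrightarrow> L (r, w) = H r w"
    and L_end: "\<And>s w. s \<in> standard_simplex n \<Longrightarrow> snd (L (s, w)) 1 = y s w"
    using endpoint_lifting_prod_simplex[where H = H and y = y and \<psi> = \<psi>, OF n k
        H_uncurried(1,2) y_uncurried(1,2) compatible]
    by blast
  define z where "z = (\<lambda>s. restrict (\<lambda>w. L (s, w)) (standard_simplex c))"
  have "continuous_map (simplex_top n) ?M z"
    unfolding z_def using L_cont H_uncurried(2)
    by (intro continuous_map_filtered_mapping_space_curry) (simp_all add: L_fst)
  moreover have "z r = h r" if r: "r \<in> horn n k" for r
  proof -
    have "r \<in> standard_simplex n"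
      using r by (simp add: horn_def)
    then have "z r = H r"
      using L_horn[OF r] H_uncurried(3) by (auto simp: fun_eq_iff z_def extensional_def)
    then show ?thesis
      by (simp add: H_def horn_retraction_eq_self[OF r])
  qed
  moreover have "postcomp ?A (\<lambda>z. snd z 1) (z s) = y s" if "s \<in> standard_simplex n" for s
    using that L_end[OF that] y_uncurried(3)[OF that]
    by (auto simp: fun_eq_iff postcomp_def z_def extensional_def)
  ultimately show ?thesis
    by blast
qed

lemma filtered_fibration_path_endpoint:
  "filtered_fibration (mapping_path_space X \<phi>X Y \<phi>Y f) (\<lambda>z. \<phi>X (fst z)) Y \<phi>Y (\<lambda>z. snd z 1)"
  unfolding filtered_fibration_def
proof (intro allI impI kan_fibration_sing_if_horn_lifting)
  fix m c n k h y
  assume "1 \<le> n" "k \<le> n"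
    and "continuous_map (subtopology (simplex_top n) (horn n k)) (filtered_mapping_space (simplex_top m)
      (realize_simplex m c) (mapping_path_space X \<phi>X Y \<phi>Y f) (\<lambda>z. \<phi>X (fst z))) h"
    and "continuous_map (simplex_top n) (filtered_mapping_space (simplex_top m) (realize_simplex m c) Y \<phi>Y) y"
    and "\<And>r. r \<in> horn n k \<Longrightarrow> postcomp (simplex_top m) (\<lambda>z. snd z 1) (h r) = y r"
  then show "\<exists>z. continuous_map (simplex_top n) (filtered_mapping_space (simplex_top m)
      (realize_simplex m c) (mapping_path_space X \<phi>X Y \<phi>Y f) (\<lambda>z. \<phi>X (fst z))) z
    \<and> (\<forall>r\<in>horn n k. z r = h r)
    \<and> (\<forall>s\<in>standard_simplex n. postcomp (simplex_top m) (\<lambda>z. snd z 1) (z s) = y s)"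
    by (rule horn_lifting_path_endpoint)
qed

theorem lemma2p11:
  fixes X :: "'a topology" and \<phi>X :: "'a \<Rightarrow> 'p::order \<Rightarrow> real"
    and Y :: "'b topology" and \<phi>Y :: "'b \<Rightarrow> 'p \<Rightarrow> real"
    and f :: "'a \<Rightarrow> 'b"
  assumes "strongly_filtered X \<phi>X" and "strongly_filtered Y \<phi>Y"
    and "filtered_map X \<phi>X Y \<phi>Y f"
  shows "\<exists>(Z :: ('a \<times> (real \<Rightarrow> 'b)) topology) \<phi>Z q i r.
           strongly_filtered Z \<phi>Z
         \<and> filtered_map Z \<phi>Z Y \<phi>Y q \<and> filtered_fibration Z \<phi>Z Y \<phi>Y q
         \<and> filtered_map X \<phi>X Z \<phi>Z i \<and> filtered_map Z \<phi>Z X \<phi>X r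
         \<and> (\<forall>x \<in> topspace X. q (i x) = f x)
         \<and> (\<forall>x \<in> topspace X. r (i x) = x)
         \<and> filtered_homotopic Z \<phi>Z (i \<circ> r) id"
proof (intro exI conjI)
  let ?Z = "mapping_path_space X \<phi>X Y \<phi>Y f"
  show "strongly_filtered ?Z (\<lambda>z. \<phi>X (fst z))"
    using assms(1) by (rule strongly_filtered_mapping_path_space)
  show "filtered_map ?Z (\<lambda>z. \<phi>X (fst z)) Y \<phi>Y (\<lambda>z. snd z 1)"
    by (rule filtered_map_path_endpoint)
  show "filtered_fibration ?Z (\<lambda>z. \<phi>X (fst z)) Y \<phi>Y (\<lambda>z. snd z 1)"
    by (rule filtered_fibration_path_endpoint)
  show "filtered_map X \<phi>X ?Z (\<lambda>z. \<phi>X (fst z)) (\<lambda>x. (x, restrict (\<lambda>\<tau>. f x) {0..1}))"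
    using assms(1,3) by (rule filtered_map_constant_path)
  show "filtered_map ?Z (\<lambda>z. \<phi>X (fst z)) X \<phi>X fst"
    by (rule filtered_map_mapping_path_space_fst)
  show "filtered_homotopic ?Z (\<lambda>z. \<phi>X (fst z)) ((\<lambda>x. (x, restrict (\<lambda>\<tau>. f x) {0..1})) \<circ> fst) id"
    by (rule filtered_homotopic_path_contraction)
qed simp_all

end
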